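(* For all $n,s\in\mathbb{N}$ and every $p_{X,Y}\in\mathcal{E}[0,1]^2_n$ there exists a ReLU network $\Psi\in\mathcal{N}_{1,2}$ with connectivity $\mathcal{M}(\Psi)<88(n^2+ns)$ and depth $\mathcal{L}(\Psi)=s+5$ such that \[ W(\Psi\#U,\,p_{X,Y})\le\frac{2\sqrt2}{n2^s}. \]
   Context: $\mathcal{E}[0,1]^2_n$: densities $p(x,y)=\sum_{k_1,k_2=0}^{n-1}w_{k_1,k_2}\chi_{[k_1/n,(k_1+1)/n]\times[k_2/n,(k_2+1)/n]}(x,y)$ with all $w_{k_1,k_2}>0$ and $\sum w_{k_1,k_2}=n^2$. A ReLU network of depth $L\ge2$ is $\Phi=W_L\circ\rho\circ W_{L-1}\circ\cdots\circ\rho\circ W_1$ with affine $W_\ell(x)=A_\ell x+b_\ell$ and $\rho(x)=\max(x,0)$ componentwise; $\mathcal{L}(\Phi)=L$; $\mathcal{M}(\Phi)$ is the total number of nonzero entries of all $A_\ell,b_\ell$; $\mathcal{N}_{d,d'}$ is the set of such networks with input dimension $d$, output dimension $d'$. $U$ is uniform on $[0,1]$, $\#$ is push-forward, and $W$ is the 1-Wasserstein distance $W(\mu,\nu)=\inf_\pi\int|x-y|d\pi$ over couplings of $\mu,\nu$ with Euclidean norm. *)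

theory Defs
  imports "HOL-Probability.Probability"
begin

definition hist_density :: "nat \<Rightarrow> (nat \<Rightarrow> nat \<Rightarrow> real) \<Rightarrow> real \<times> real \<Rightarrow> real" where
  "hist_density n w = (\<lambda>(x, y). \<Sum>k1<n. \<Sum>k2<n.
      w k1 k2 * indicator ({real k1 / real n .. (real k1 + 1) / real n}
                         \<times> {real k2 / real n .. (real k2 + 1) / real n}) (x, y))"

definition hist_class :: "nat \<Rightarrow> (real \<times> real \<Rightarrow> real) set" where
  "hist_class n = {hist_density n w | w.
      (\<forall>k1<n. \<forall>k2<n. w k1 k2 > 0) \<and> (\<Sum>k1<n. \<Sum>k2<n. w k1 k2) = real n ^ 2}"

text \<open>A layer is an affine map given by its matrix (as a list of rows) and bias vector.\<close>
type_synonym layer = "real list list \<times> real list"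

definition affine_apply :: "layer \<Rightarrow> real list \<Rightarrow> real list" where
  "affine_apply l x = map2 (\<lambda>row bi. sum_list (map2 (*) row x) + bi) (fst l) (snd l)"

definition relu :: "real \<Rightarrow> real" where
  "relu x = max x 0"

fun realize :: "layer list \<Rightarrow> real list \<Rightarrow> real list" where
  "realize [] x = x"
| "realize [l] x = affine_apply l x"
| "realize (l # l' # ls) x = realize (l' # ls) (map relu (affine_apply l x))"

definition layer_dims :: "nat \<Rightarrow> nat \<Rightarrow> layer \<Rightarrow> bool" where
  "layer_dims d d' l \<longleftrightarrow> length (fst l) = d' \<and> length (snd l) = d'
      \<and> (\<forall>row \<in> set (fst l). length row = d)"

definition relu_nets :: "nat \<Rightarrow> nat \<Rightarrow> layer list set" where
  "relu_nets d d' = {ls. length ls \<ge> 2 \<and> (\<exists>ws. length ws = length ls + 1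
      \<and> ws ! 0 = d \<and> ws ! length ls = d'
      \<and> (\<forall>i < length ls. layer_dims (ws ! i) (ws ! Suc i) (ls ! i)))}"

definition depth :: "layer list \<Rightarrow> nat" where
  "depth ls = length ls"

definition connectivity :: "layer list \<Rightarrow> nat" where
  "connectivity ls = (\<Sum>l\<leftarrow>ls. length (filter (\<lambda>a. a \<noteq> 0) (concat (fst l)))
                                + length (filter (\<lambda>a. a \<noteq> 0) (snd l)))"

definition net_fun_1_2 :: "layer list \<Rightarrow> real \<Rightarrow> real \<times> real" where
  "net_fun_1_2 ls t = (let v = realize ls [t] in (v ! 0, v ! 1))"

definition coupling :: "'a measure \<Rightarrow> 'a measure \<Rightarrow> ('a \<times> 'a) measure \<Rightarrow> bool" where
  "coupling \<mu> \<nu> \<pi> \<longleftrightarrow> sets \<pi> = sets (\<mu> \<Otimes>\<^sub>M \<nu>)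
      \<and> distr \<pi> \<mu> fst = \<mu> \<and> distr \<pi> \<nu> snd = \<nu>"

definition wasserstein1 :: "'a::metric_space measure \<Rightarrow> 'a measure \<Rightarrow> ennreal" where
  "wasserstein1 \<mu> \<nu> = (INF \<pi> \<in> {\<pi>. coupling \<mu> \<nu> \<pi>}. \<integral>\<^sup>+ z. ennreal (dist (fst z) (snd z)) \<partial>\<pi>)"

definition unif01 :: "real measure" where
  "unif01 = uniform_measure lborel {0..1}"

definition pushforward_U :: "(real \<Rightarrow> real \<times> real) \<Rightarrow> (real \<times> real) measure" where
  "pushforward_U f = distr unif01 borel f"

definition density_measure :: "(real \<times> real \<Rightarrow> real) \<Rightarrow> (real \<times> real) measure" where
  "density_measure p = density lborel (\<lambda>z. ennreal (p z))"

end

theory Submission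
  imports Defs
begin

text \<open>Give column \<open>k\<close> of the histogram a subinterval of \<open>[0, 1]\<close> of length equal to its mass.  On it
  the network computes the local coordinate \<open>u\<close>, folds it \<open>s\<close> times with the tent map, and feeds the
  result into the piecewise linear inverse of the conditional distribution function of \<open>y\<close> in that
  column; the first output is \<open>(k + u)/n\<close>.  Conversely, send \<open>(x, y)\<close> to the point of the tooth of
  \<open>tent ^^ s\<close> containing the offset of \<open>x\<close> in its column that is mapped to the conditional
  distribution function of \<open>y\<close>.  This transport map pushes the histogram to the uniform distribution,
  and the network maps its value back to \<open>(x', y)\<close> with \<open>|x' - x| \<le> 1/(n 2^s)\<close>.  Coupling the
  histogram with its image under the composite gives \<open>W \<le> 1/(n 2^s)\<close>, which is stronger than
  the claimed bound.\<close>

definition dot :: "real list \<Rightarrow> real list \<Rightarrow> real" where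
  "dot r x = sum_list (map2 (*) r x)"

definition layer_of_rows :: "(real list \<times> real) list \<Rightarrow> layer" where
  "layer_of_rows P = (map fst P, map snd P)"

lemma affine_apply_layer_of_rows: "affine_apply (layer_of_rows P) x = map (\<lambda>(r, b). dot r x + b) P"
  unfolding affine_apply_def layer_of_rows_def dot_def by (induction P) auto

lemma dot_Nil [simp]: "dot [] x = 0" "dot r [] = 0"
  by (auto simp: dot_def)

lemma dot_Cons [simp]: "dot (a # r) (b # x) = a * b + dot r x"
  by (simp add: dot_def)

lemma dot_append: "length r1 = length x1 \<Longrightarrow> dot (r1 @ r2) (x1 @ x2) = dot r1 x1 + dot r2 x2"
  by (simp add: dot_def)

lemma dot_concat:
  "(\<And>l. l \<in> set L \<Longrightarrow> length (F l) = length (G l)) \<Longrightarrow>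
     dot (concat (map F L)) (concat (map G L)) = (\<Sum>l\<leftarrow>L. dot (F l) (G l))"
  by (induction L) (auto simp: dot_append)

lemma dot_replicate_0: "dot (replicate k 0) x = 0"
  unfolding dot_def by (induction k arbitrary: x) (auto simp: zip_Cons1 split: list.split)

lemma length_concat_map_const:
  "(\<And>x. x \<in> set L \<Longrightarrow> length (F x) = m) \<Longrightarrow> length (concat (map F L)) = length L * m"
  by (induction L) auto

lemma relu_nonneg: "relu x \<ge> 0"
  by (simp add: relu_def)

lemma relu_eq_self: "x \<ge> 0 \<Longrightarrow> relu x = x"
  by (simp add: relu_def)

lemma relu_eq_0: "x \<le> 0 \<Longrightarrow> relu x = 0"
  by (simp add: relu_def)

lemma relu_relu [simp]: "relu (relu x) = relu x"
  by (simp add: relu_def)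

lemma measurable_relu [measurable]: "relu \<in> borel_measurable borel"
  unfolding relu_def[abs_def] by measurable

fun hidden :: "layer list \<Rightarrow> real list \<Rightarrow> real list" where
  "hidden [] x = x"
| "hidden (l # ls) x = hidden ls (map relu (affine_apply l x))"

lemma realize_snoc: "realize (ls @ [l]) x = affine_apply l (hidden ls x)"
proof (induction ls arbitrary: x)
  case (Cons l0 ls)
  obtain l' ls' where e: "ls @ [l] = l' # ls'" by (cases "ls @ [l]") auto
  have "realize ((l0 # ls) @ [l]) x = realize (ls @ [l]) (map relu (affine_apply l0 x))"
    using e by simp
  then show ?case using Cons.IH by simp
qed simp

lemma hidden_append: "hidden (xs @ ys) x = hidden ys (hidden xs x)"
  by (induction xs arbitrary: x) auto

fun layer_chain :: "nat \<Rightarrow> layer list \<Rightarrow> nat \<Rightarrow> bool" where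
  "layer_chain d [] d' \<longleftrightarrow> d = d'"
| "layer_chain d (l # ls) d' \<longleftrightarrow> (\<exists>e. layer_dims d e l \<and> layer_chain e ls d')"

lemma layer_chain_append:
  "layer_chain d ls1 e \<Longrightarrow> layer_chain e ls2 d' \<Longrightarrow> layer_chain d (ls1 @ ls2) d'"
  by (induction ls1 arbitrary: d) auto

lemma layer_chain_replicate: "layer_dims d d l \<Longrightarrow> layer_chain d (replicate k l) d"
  by (induction k) auto

lemma layer_chain_widths:
  "layer_chain d ls d' \<Longrightarrow> \<exists>ws. length ws = length ls + 1 \<and> ws ! 0 = d \<and> ws ! length ls = d'
      \<and> (\<forall>i < length ls. layer_dims (ws ! i) (ws ! Suc i) (ls ! i))"
proof (induction ls arbitrary: d)
  case Nil
  then show ?case by (intro exI[of _ "[d]"]) auto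
next
  case (Cons l ls)
  then obtain e where e: "layer_dims d e l" "layer_chain e ls d'" by auto
  then obtain ws where ws: "length ws = length ls + 1" "ws ! 0 = e" "ws ! length ls = d'"
      "\<forall>i < length ls. layer_dims (ws ! i) (ws ! Suc i) (ls ! i)" using Cons.IH by blast
  show ?case
  proof (intro exI[of _ "d # ws"] conjI allI impI)
    fix i assume "i < length (l # ls)"
    then show "layer_dims ((d # ws) ! i) ((d # ws) ! Suc i) ((l # ls) ! i)"
      using ws e by (cases i) auto
  qed (use ws in auto)
qed

lemma relu_nets_if_layer_chain: "layer_chain d ls d' \<Longrightarrow> length ls \<ge> 2 \<Longrightarrow> ls \<in> relu_nets d d'"
  unfolding relu_nets_def using layer_chain_widths by blast

lemma layer_dims_layer_of_rows:
  "(\<And>r b. (r, b) \<in> set P \<Longrightarrow> length r = d) \<Longrightarrow> length P = d' \<Longrightarrow> layer_dims d d' (layer_of_rows P)"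
  unfolding layer_dims_def layer_of_rows_def by auto

definition nonzeros :: "real list \<Rightarrow> nat" where
  "nonzeros r = length (filter (\<lambda>a. a \<noteq> 0) r)"

definition layer_nonzeros :: "layer \<Rightarrow> nat" where
  "layer_nonzeros l = nonzeros (concat (fst l)) + nonzeros (snd l)"

lemma connectivity_eq_sum: "connectivity ls = (\<Sum>l\<leftarrow>ls. layer_nonzeros l)"
  unfolding connectivity_def layer_nonzeros_def nonzeros_def ..

lemma nonzeros_le_length: "nonzeros r \<le> length r"
  by (simp add: nonzeros_def)

lemma nonzeros_append [simp]: "nonzeros (xs @ ys) = nonzeros xs + nonzeros ys"
  by (simp add: nonzeros_def)

lemma nonzeros_Nil [simp]: "nonzeros [] = 0"
  by (simp add: nonzeros_def)

lemma nonzeros_concat: "nonzeros (concat xs) = (\<Sum>x\<leftarrow>xs. nonzeros x)"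
  by (induction xs) auto

lemma layer_nonzeros_of_rows_le:
  assumes "\<And>r b. (r, b) \<in> set P \<Longrightarrow> nonzeros r \<le> d"
  shows "layer_nonzeros (layer_of_rows P) \<le> length P * (d + 1)"
proof -
  have "nonzeros (concat (map fst P)) \<le> length P * d"
    using assms
  proof (induction P)
    case (Cons row P)
    have "nonzeros (fst row) \<le> d" using Cons.prems[of "fst row" "snd row"] by simp
    moreover have "nonzeros (concat (map fst P)) \<le> length P * d" using Cons by force
    ultimately show ?case by simp
  qed simp
  moreover have "nonzeros (map snd P) \<le> length P"
    using nonzeros_le_length[of "map snd P"] by simp
  ultimately show ?thesis
    by (simp add: layer_nonzeros_def layer_of_rows_def)
qed

section \<open>The tent map\<close>

definition tent :: "real \<Rightarrow> real" where
  "tent x = 2 * relu x - 4 * relu (x - 1/2)"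

lemma tent_lower: "0 \<le> x \<Longrightarrow> x \<le> 1/2 \<Longrightarrow> tent x = 2 * x"
  by (simp add: tent_def relu_def)

lemma tent_upper: "1/2 \<le> x \<Longrightarrow> x \<le> 1 \<Longrightarrow> tent x = 2 - 2 * x"
  by (simp add: tent_def relu_def)

lemma tent_range: "0 \<le> x \<Longrightarrow> x \<le> 1 \<Longrightarrow> 0 \<le> tent x \<and> tent x \<le> 1"
  by (cases "x \<le> 1/2") (auto simp: tent_lower tent_upper)

lemma tent_reflect: "0 \<le> x \<Longrightarrow> x \<le> 1 \<Longrightarrow> tent (1 - x) = tent x"
  by (cases "x \<le> 1/2") (auto simp: tent_lower tent_upper)

lemma tent_le: "0 \<le> x \<Longrightarrow> x \<le> 1 \<Longrightarrow> tent x \<le> 2 * x"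
  by (cases "x \<le> 1/2") (auto simp: tent_lower tent_upper)

lemma measurable_tent [measurable]: "tent \<in> borel_measurable borel"
  unfolding tent_def[abs_def] by measurable

lemma measurable_funpow_tent [measurable]: "(tent ^^ k) \<in> borel_measurable borel"
  by (induction k) (auto intro: measurable_compose)

lemma funpow_tent_range: "0 \<le> x \<Longrightarrow> x \<le> 1 \<Longrightarrow> 0 \<le> (tent ^^ k) x \<and> (tent ^^ k) x \<le> 1"
  by (induction k) (auto simp: tent_range)

lemma funpow_tent_le: "0 \<le> x \<Longrightarrow> x \<le> 1 \<Longrightarrow> (tent ^^ k) x \<le> 2 ^ k * x"
proof (induction k arbitrary: x)
  case (Suc k)
  have "(tent ^^ Suc k) x = (tent ^^ k) (tent x)" by (simp add: funpow_swap1)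
  also have "\<dots> \<le> 2 ^ k * tent x" using Suc.IH tent_range[OF Suc.prems] by blast
  also have "\<dots> \<le> 2 ^ k * (2 * x)" using tent_le[OF Suc.prems] by simp
  finally show ?case by simp
qed simp

lemma funpow_tent_reflect: "k \<ge> 1 \<Longrightarrow> 0 \<le> x \<Longrightarrow> x \<le> 1 \<Longrightarrow> (tent ^^ k) (1 - x) = (tent ^^ k) x"
  by (cases k) (simp_all only: funpow_Suc_right comp_def tent_reflect)

lemma funpow_tent_le_reflect: "k \<ge> 1 \<Longrightarrow> 0 \<le> x \<Longrightarrow> x \<le> 1 \<Longrightarrow> (tent ^^ k) x \<le> 2 ^ k * (1 - x)"
  using funpow_tent_le[of "1 - x" k] funpow_tent_reflect[of k x] by simp

text \<open>The point of the \<open>m\<close>-th tooth of \<open>tent ^^ k\<close> (the interval \<open>[m/2^k, (m+1)/2^k]\<close>, on which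
  \<open>tent ^^ k\<close> is increasing for even \<open>m\<close> and decreasing for odd \<open>m\<close>) that is mapped to \<open>\<sigma>\<close>.\<close>

definition tent_preimage :: "nat \<Rightarrow> nat \<Rightarrow> real \<Rightarrow> real" where
  "tent_preimage k m \<sigma> = (if even m then (real m + \<sigma>) / 2 ^ k else (real m + 1 - \<sigma>) / 2 ^ k)"

lemma tent_preimage_bounds:
  "0 \<le> \<sigma> \<Longrightarrow> \<sigma> \<le> 1 \<Longrightarrow> real m / 2 ^ k \<le> tent_preimage k m \<sigma> \<and> tent_preimage k m \<sigma> \<le> (real m + 1) / 2 ^ k"
  by (auto simp: tent_preimage_def divide_right_mono)

lemma tent_preimage_range:
  assumes "0 \<le> \<sigma>" "\<sigma> \<le> 1" "m < 2 ^ k"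
  shows "0 \<le> tent_preimage k m \<sigma> \<and> tent_preimage k m \<sigma> \<le> 1"
proof -
  have "real (m + 1) \<le> real (2 ^ k)" using assms(3) by (simp only: of_nat_le_iff)
  then have "(real m + 1) / 2 ^ k \<le> 1" by simp
  moreover have "0 \<le> real m / 2 ^ k" by simp
  ultimately show ?thesis using tent_preimage_bounds[OF assms(1,2), of m k] by linarith
qed

lemma funpow_tent_preimage:
  "0 \<le> \<sigma> \<Longrightarrow> \<sigma> \<le> 1 \<Longrightarrow> m < 2 ^ k \<Longrightarrow> (tent ^^ k) (tent_preimage k m \<sigma>) = \<sigma>"
proof (induction k arbitrary: m)
  case 0
  then show ?case by (simp add: tent_preimage_def)
next
  case (Suc k)
  let ?u = "tent_preimage (Suc k) m \<sigma>"
  have u: "real m / 2 ^ Suc k \<le> ?u" "?u \<le> (real m + 1) / 2 ^ Suc k"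
    using tent_preimage_bounds[OF Suc.prems(1,2), of m "Suc k"] by auto
  have "real (m + 1) \<le> real (2 ^ Suc k)" using Suc.prems(3) by (simp only: of_nat_le_iff)
  then have m: "real m + 1 \<le> 2 ^ Suc k" by simp
  have "(tent ^^ Suc k) ?u = (tent ^^ k) (tent ?u)"
    by (simp add: funpow_swap1)
  also have "\<dots> = \<sigma>"
  proof (cases "m < 2 ^ k")
    case True
    have "real (m + 1) \<le> real (2 ^ k)" using True by (simp only: of_nat_le_iff)
    then have "(real m + 1) / 2 ^ Suc k \<le> 1/2" by (simp add: field_simps)
    moreover have "0 \<le> real m / 2 ^ Suc k" by simp
    ultimately have "0 \<le> ?u" "?u \<le> 1/2" using u by linarith+
    then have "tent ?u = tent_preimage k m \<sigma>"
      by (simp add: tent_lower tent_preimage_def field_simps)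
    then show ?thesis using Suc.IH[OF Suc.prems(1,2) True] by simp
  next
    case False
    text \<open>Reflection about \<open>1/2\<close> maps the \<open>m\<close>-th tooth of level \<open>k+1\<close> to tooth \<open>2^(k+1) - 1 - m\<close>,
      which lies in the left half and has the opposite parity.\<close>
    define m' where "m' = 2 ^ Suc k - 1 - m"
    have m'k: "m' < 2 ^ k" using False Suc.prems(3) by (simp add: m'_def)
    have rm': "real m' = 2 ^ Suc k - 1 - real m" using Suc.prems(3) by (simp add: m'_def of_nat_diff)
    have par: "even m' \<longleftrightarrow> odd m" using Suc.prems(3) False by (simp add: m'_def even_diff_nat)
    have "real (2 ^ k) \<le> real m" using False by (simp only: of_nat_le_iff not_less)
    then have "1/2 \<le> real m / 2 ^ Suc k" by (simp add: field_simps)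
    moreover have "(real m + 1) / 2 ^ Suc k \<le> 1" using m by (simp add: field_simps)
    ultimately have "1/2 \<le> ?u" "?u \<le> 1" using u by linarith+
    then have "tent ?u = 2 - 2 * ?u" by (rule tent_upper)
    also have "\<dots> = tent_preimage k m' \<sigma>" using par by (simp add: tent_preimage_def field_simps rm')
    finally show ?thesis using Suc.IH[OF Suc.prems(1,2) m'k] by simp
  qed
  finally show ?case .
qed

lemma null_sets_Int_singleton: "A \<in> sets borel \<Longrightarrow> A \<inter> {b::real} \<in> null_sets lborel"
  by (rule null_sets_subset[of "{b}"]) auto

lemma emeasure_Int_Icc_split:
  assumes "a \<le> b" "b \<le> c" "A \<in> sets borel"
  shows "emeasure lborel (A \<inter> {a..b}) + emeasure lborel (A \<inter> {b..c}) = emeasure lborel (A \<inter> {a..(c::real)})"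
proof -
  have "A \<inter> {a..b} = (A \<inter> {a..<b}) \<union> (A \<inter> {b})" using assms by auto
  then have "emeasure lborel (A \<inter> {a..b}) = emeasure lborel (A \<inter> {a..<b})"
    using assms by (simp add: emeasure_Un_null_set null_sets_Int_singleton)
  moreover have "A \<inter> {a..c} = (A \<inter> {a..<b}) \<union> (A \<inter> {b..c})" using assms by auto
  moreover have "emeasure lborel (A \<inter> {a..<b}) + emeasure lborel (A \<inter> {b..c})
      = emeasure lborel ((A \<inter> {a..<b}) \<union> (A \<inter> {b..c}))"
    using assms by (intro plus_emeasure) auto
  ultimately show ?thesis by simp
qed

lemma monotone_chain_le: "(\<And>i. i < N \<Longrightarrow> b i \<le> b (Suc i)) \<Longrightarrow> (b 0 :: real) \<le> b N"
  by (induction N) (auto intro: order.trans)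

lemma emeasure_Int_Icc_telescope:
  assumes "\<And>i. i < N \<Longrightarrow> b i \<le> b (Suc i)" "A \<in> sets borel"
  shows "(\<Sum>i<N. emeasure lborel (A \<inter> {b i..b (Suc i)})) = emeasure lborel (A \<inter> {b 0..(b N :: real)})"
  using assms(1)
proof (induction N)
  case 0
  then show ?case
    using null_sets_Int_singleton[OF assms(2), of "b 0"] by (simp add: null_sets_def)
next
  case (Suc N)
  then show ?case
    using monotone_chain_le[of N b] assms(2) by (simp add: emeasure_Int_Icc_split)
qed

lemma indicator_atLeastLessThan_partition:
  assumes "\<And>i. i < N \<Longrightarrow> b i \<le> b (Suc i)"
  shows "indicator {b 0..<b N} x = (\<Sum>i<N. indicator {b i..<b (Suc i)} (x::real) :: ennreal)"
  using assms
proof (induction N)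
  case (Suc N)
  have "b 0 \<le> b N" using monotone_chain_le[of N b] Suc.prems by auto
  then have "indicator {b 0..<b (Suc N)} x
      = (indicator {b 0..<b N} x + indicator {b N..<b (Suc N)} x :: ennreal)"
    using Suc.prems[of N] by (auto simp: indicator_def)
  then show ?case using Suc by simp
qed simp

lemma nn_integral_indicator_affine:
  assumes "\<beta> \<noteq> 0" "l \<le> r" "\<And>y. l \<le> y \<Longrightarrow> y \<le> r \<Longrightarrow> \<tau> y = \<alpha> + \<beta> * y"
    and A: "A \<in> sets borel"
  shows "ennreal \<bar>\<beta>\<bar> * (\<integral>\<^sup>+y. indicator {l..r} y * indicator A (\<tau> y) \<partial>lborel) =
    emeasure lborel (A \<inter> {min (\<alpha> + \<beta> * l) (\<alpha> + \<beta> * r) .. max (\<alpha> + \<beta> * l) (\<alpha> + \<beta> * (r::real))})"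
proof -
  define J where "J = {min (\<alpha> + \<beta> * l) (\<alpha> + \<beta> * r) .. max (\<alpha> + \<beta> * l) (\<alpha> + \<beta> * r)}"
  have "\<alpha> + \<beta> * y \<in> J \<longleftrightarrow> l \<le> y \<and> y \<le> r" for y
    using assms(1,2) unfolding J_def
    by (cases "\<beta> > 0") (auto simp: min_def max_def mult_le_cancel_left)
  then have eq: "indicator {l..r} y * indicator A (\<tau> y) = (indicator (A \<inter> J) (\<alpha> + \<beta> * y) :: ennreal)" for y
    using assms(3)[of y] by (auto simp: indicator_def)
  have "emeasure lborel (A \<inter> J) = (\<integral>\<^sup>+x. indicator (A \<inter> J) x \<partial>lborel)"
    using A by (simp add: J_def)
  also have "\<dots> = ennreal \<bar>\<beta>\<bar> * (\<integral>\<^sup>+y. indicator (A \<inter> J) (\<alpha> + \<beta> * y) \<partial>lborel)"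
    using A assms(1) by (intro nn_integral_real_affine) (auto simp: J_def)
  finally show ?thesis unfolding eq J_def by simp
qed

lemma sum_prefix_then_single:
  "k1 < (N::nat) \<Longrightarrow> (\<Sum>k<N. if k < k1 then f k else if k = k1 then (b::real) else 0) = (\<Sum>k<k1. f k) + b"
proof (induction N)
  case (Suc N)
  show ?case
  proof (cases "k1 < N")
    case False
    then have "k1 = N" using Suc.prems by simp
    then show ?thesis by simp
  qed (use Suc in simp)
qed simp

lemma sum_alternating_sign: "(\<Sum>k<m. (-1::real) ^ k) = (if even m then 0 else 1)"
  by (induction m) auto

section \<open>Couplings from transport maps\<close>

text \<open>The coupling is the image of \<open>\<nu>\<close> under \<open>z \<mapsto> (f (\<theta> z), z)\<close>.\<close>

lemma wasserstein1_le_transport: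
  fixes \<nu> :: "'a::{metric_space, second_countable_topology} measure"
  assumes sets_\<nu>: "sets \<nu> = sets borel"
    and \<theta>: "\<theta> \<in> measurable \<nu> M" and push: "distr \<nu> M \<theta> = \<mu>"
    and f: "f \<in> measurable M borel"
  shows "wasserstein1 (distr \<mu> borel f) \<nu> \<le> (\<integral>\<^sup>+z. ennreal (dist (f (\<theta> z)) z) \<partial>\<nu>)"
proof -
  define \<rho> where "\<rho> = distr \<mu> borel f"
  define F where "F z = (f (\<theta> z), z)" for z
  define \<pi> where "\<pi> = distr \<nu> (\<rho> \<Otimes>\<^sub>M \<nu>) F"
  have sets_\<rho>: "sets \<rho> = sets borel" by (simp add: \<rho>_def)
  have f\<theta>: "(\<lambda>z. f (\<theta> z)) \<in> measurable \<nu> \<rho>"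
    using measurable_comp[OF \<theta> f] by (simp add: comp_def measurable_cong_sets[OF refl sets_\<rho>])
  have F: "F \<in> measurable \<nu> (\<rho> \<Otimes>\<^sub>M \<nu>)"
    unfolding F_def by (rule measurable_Pair[OF f\<theta>]) simp
  have "coupling \<rho> \<nu> \<pi>"
    unfolding coupling_def
  proof (intro conjI)
    show "sets \<pi> = sets (\<rho> \<Otimes>\<^sub>M \<nu>)" by (simp add: \<pi>_def)
    have "distr \<pi> \<rho> fst = distr \<nu> \<rho> (\<lambda>z. f (\<theta> z))"
      unfolding \<pi>_def using F by (subst distr_distr) (auto simp: F_def comp_def)
    also have "\<dots> = distr \<nu> borel (\<lambda>z. f (\<theta> z))"
      by (rule distr_cong) (auto simp: sets_\<rho>)
    also have "\<dots> = \<rho>"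
      unfolding \<rho>_def push[symmetric] using \<theta> f by (subst distr_distr) (auto simp: comp_def)
    finally show "distr \<pi> \<rho> fst = \<rho>" .
    have "distr \<pi> \<nu> snd = distr \<nu> \<nu> (\<lambda>z. z)"
      unfolding \<pi>_def using F by (subst distr_distr) (auto simp: F_def comp_def)
    also have "\<dots> = \<nu>" by (rule distr_id2) simp
    finally show "distr \<pi> \<nu> snd = \<nu>" .
  qed
  then have "wasserstein1 \<rho> \<nu> \<le> (\<integral>\<^sup>+z. ennreal (dist (fst z) (snd z)) \<partial>\<pi>)"
    unfolding wasserstein1_def by (intro INF_lower) simp
  also have "\<dots> = (\<integral>\<^sup>+z. ennreal (dist (f (\<theta> z)) z) \<partial>\<nu>)"
  proof -
    have "(\<lambda>z. ennreal (dist (fst z) (snd z))) \<in> borel_measurable ((borel :: 'a measure) \<Otimes>\<^sub>M borel)"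
      by measurable
    then have "(\<lambda>z. ennreal (dist (fst z) (snd z))) \<in> borel_measurable (\<rho> \<Otimes>\<^sub>M \<nu>)"
      by (simp add: measurable_cong_sets[OF sets_pair_measure_cong[OF sets_\<rho> sets_\<nu>] refl])
    then show ?thesis unfolding \<pi>_def using F by (subst nn_integral_distr) (auto simp: F_def)
  qed
  finally show ?thesis unfolding \<rho>_def .
qed

section \<open>The network for a histogram\<close>

text \<open>Column \<open>k\<close> of the histogram (the strip \<open>k/n \<le> x \<le> (k+1)/n\<close>) has probability \<open>col_mass k\<close>;
  the network spends the parameter interval \<open>[col_start k, col_start (k+1)]\<close> on it.  Within the
  column, \<open>cond_cdf k j\<close> is the conditional distribution function of \<open>y\<close> at \<open>j/n\<close>.\<close>

locale hist_net =
  fixes n s :: nat and w :: "nat \<Rightarrow> nat \<Rightarrow> real"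
  assumes n_pos: "n \<ge> 1" and s_pos: "s \<ge> 1"
    and w_pos: "\<And>k1 k2. k1 < n \<Longrightarrow> k2 < n \<Longrightarrow> w k1 k2 > 0"
    and w_sum: "(\<Sum>k1<n. \<Sum>k2<n. w k1 k2) = real n ^ 2"
begin

definition "col_weight k = (\<Sum>i<n. w k i)"
definition "col_mass k = col_weight k / real n ^ 2"
definition "col_start k = (\<Sum>j<k. col_mass j)"
definition "cond_cdf k j = (\<Sum>i<j. w k i) / col_weight k"
definition "cond_mass k j = w k j / col_weight k"
definition "teeth = (2::real) ^ s"

lemma col_weight_pos: "k < n \<Longrightarrow> col_weight k > 0"
  unfolding col_weight_def using n_pos w_pos by (intro sum_pos) auto

lemma col_mass_pos: "k < n \<Longrightarrow> col_mass k > 0"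
  unfolding col_mass_def using col_weight_pos n_pos by simp

lemma sum_col_mass: "(\<Sum>k<n. col_mass k) = 1"
  using w_sum n_pos unfolding col_mass_def col_weight_def by (simp add: sum_divide_distrib[symmetric])

lemma col_start_0 [simp]: "col_start 0 = 0"
  by (simp add: col_start_def)

lemma col_start_Suc: "col_start (Suc k) = col_start k + col_mass k"
  by (simp add: col_start_def)

lemma col_start_n: "col_start n = 1"
  using sum_col_mass by (simp add: col_start_def)

lemma col_start_mono: "k \<le> k' \<Longrightarrow> k' \<le> n \<Longrightarrow> col_start k \<le> col_start k'"
proof (induction k' rule: dec_induct)
  case (step m)
  then show ?case using col_mass_pos[of m] by (simp add: col_start_Suc)
qed simp

lemma cond_mass_pos: "k < n \<Longrightarrow> j < n \<Longrightarrow> cond_mass k j > 0"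
  unfolding cond_mass_def using col_weight_pos w_pos by simp

lemma cond_cdf_0 [simp]: "cond_cdf k 0 = 0"
  by (simp add: cond_cdf_def)

lemma cond_cdf_Suc: "cond_cdf k (Suc j) = cond_cdf k j + cond_mass k j"
  by (simp add: cond_cdf_def cond_mass_def add_divide_distrib)

lemma cond_cdf_n: "k < n \<Longrightarrow> cond_cdf k n = 1"
  using col_weight_pos[of k] by (simp add: cond_cdf_def col_weight_def)

lemma cond_cdf_mono: "j \<le> j' \<Longrightarrow> k < n \<Longrightarrow> j' \<le> n \<Longrightarrow> cond_cdf k j \<le> cond_cdf k j'"
proof (induction j' rule: dec_induct)
  case (step m)
  then show ?case using cond_mass_pos[of k m] by (simp add: cond_cdf_Suc)
qed simp

lemma cond_cdf_nonneg: "k < n \<Longrightarrow> j \<le> n \<Longrightarrow> 0 \<le> cond_cdf k j"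
  using cond_cdf_mono[of 0 j k] by simp

lemma cond_cdf_le_1: "k < n \<Longrightarrow> j \<le> n \<Longrightarrow> cond_cdf k j \<le> 1"
  using cond_cdf_mono[of j n k] cond_cdf_n by simp

lemma teeth_pos: "teeth > 0"
  by (simp add: teeth_def)

definition "layer_ramps =
  layer_of_rows (concat (map (\<lambda>k. [([1], - col_start k), ([1], - col_start (Suc k))]) [0..<n]))"
definition "row_zigzag = concat (map (\<lambda>k. [(-1) ^ k / col_mass k, - ((-1) ^ k / col_mass k)]) [0..<n])"
definition "row_column = concat (map (\<lambda>k. [1 / col_mass k, - (1 / col_mass k)]) [0..<n])"
definition "layer_coords = layer_of_rows [(row_zigzag, 0), (row_zigzag, -1/2), (row_column, 0)]"
definition "layer_identity = layer_of_rows [([1,0,0], 0), ([0,1,0], 0), ([0,0,1], 0)]"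
definition "layer_tent = layer_of_rows [([2,-4,0], 0), ([2,-4,0], -1/2), ([0,0,1], 0)]"
definition "layer_strips = layer_of_rows ([([2,-4,0], 0), ([0,0,1], 0)] @
    concat (map (\<lambda>k. [([0,0,-1], real k), ([0,0,1], - real k - 1)]) [0..<n]))"
definition "row_cdf k j = [1 / cond_mass k j, 0] @
    concat (map (\<lambda>k'. if k' = k then [- teeth / cond_mass k j, - teeth / cond_mass k j] else [0,0]) [0..<n])"
definition "layer_cdf = layer_of_rows (concat (map (\<lambda>k. concat (map (\<lambda>j.
     [(row_cdf k j, - cond_cdf k j / cond_mass k j), (row_cdf k j, - cond_cdf k (Suc j) / cond_mass k j)])
     [0..<n])) [0..<n]) @ [([0,1] @ replicate (2*n) 0, 0)])"
definition "row_out_y = concat (map (\<lambda>k. concat (map (\<lambda>j. [1 / real n, - (1 / real n)]) [0..<n])) [0..<n])"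
definition "layer_out = layer_of_rows [(replicate (2*n*n) 0 @ [1 / real n], 0), (row_out_y @ [0], 0)]"

text \<open>The first layers compute the local coordinate \<open>u\<close> of \<open>t\<close> in its column (reflected to
  \<open>1 - u\<close> on odd columns, so the result is continuous) together with \<open>k + u\<close>; \<open>s\<close> tent steps follow,
  the last one merged into \<open>layer_strips\<close>, which also measures the distance of \<open>k + u\<close> to every
  column.  \<open>layer_identity\<close> only pads the depth to \<open>s + 5\<close>.\<close>

definition "net = [layer_ramps, layer_coords, layer_identity] @ replicate (s - 1) layer_tent @
    [layer_strips, layer_cdf, layer_out]"

lemma length_row_zigzag: "length row_zigzag = 2 * n"
  unfolding row_zigzag_def by (subst length_concat_map_const[of _ _ 2]) auto

lemma length_row_column: "length row_column = 2 * n"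
  unfolding row_column_def by (subst length_concat_map_const[of _ _ 2]) auto

lemma length_row_cdf: "length (row_cdf k j) = 2 * n + 2"
  unfolding row_cdf_def by (simp add: length_concat_map_const[of _ _ 2])

lemma length_row_out_y: "length row_out_y = 2 * n * n"
  unfolding row_out_y_def
  by (subst length_concat_map_const[of _ _ "2*n"]) (auto simp: length_concat_map_const[of _ _ 2])

lemma net_layer_chain: "layer_chain 1 net 2"
proof -
  have dims: "layer_dims 1 (2*n) layer_ramps" "layer_dims (2*n) 3 layer_coords"
    "layer_dims 3 3 layer_identity" "layer_dims 3 3 layer_tent"
    "layer_dims 3 (2*n+2) layer_strips" "layer_dims (2*n+2) (2*n*n+1) layer_cdf"
    "layer_dims (2*n*n+1) 2 layer_out"
    unfolding layer_ramps_def layer_coords_def layer_identity_def layer_tent_def layer_strips_def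
      layer_cdf_def layer_out_def
    by (auto intro!: layer_dims_layer_of_rows
        simp: length_concat_map_const[of _ _ 2] length_concat_map_const[of _ _ "2*n"]
          length_row_zigzag length_row_column length_row_cdf length_row_out_y)
  have "layer_chain 1 [layer_ramps, layer_coords, layer_identity] 3"
    "layer_chain 3 (replicate (s - 1) layer_tent) 3"
    "layer_chain 3 [layer_strips, layer_cdf, layer_out] 2"
    using dims by (auto intro: layer_chain_replicate)
  then show ?thesis
    unfolding net_def by (blast intro: layer_chain_append)
qed

lemma net_in_relu_nets: "net \<in> relu_nets 1 2"
  by (rule relu_nets_if_layer_chain[OF net_layer_chain]) (simp add: net_def)

lemma depth_net: "depth net = s + 5"
  using s_pos unfolding depth_def net_def by simp

lemma nonzeros_row_cdf: "nonzeros (row_cdf k j) \<le> 3"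
proof -
  let ?F = "\<lambda>k'. if k' = k then [- teeth / cond_mass k j, - teeth / cond_mass k j] else [0, 0]"
  have "nonzeros (concat (map ?F [0..<n])) = (\<Sum>k'\<leftarrow>[0..<n]. nonzeros (?F k'))"
    by (simp add: nonzeros_concat comp_def)
  also have "\<dots> \<le> (\<Sum>k'\<leftarrow>[0..<n]. if k' = k then 2 else 0)"
    by (rule sum_list_mono) (auto simp: nonzeros_def)
  also have "\<dots> = (\<Sum>k'\<in>{0..<n}. if k' = k then 2 else 0)"
    by (simp add: sum_list_distinct_conv_sum_set)
  also have "\<dots> \<le> 2" by simp
  finally show ?thesis unfolding row_cdf_def by (simp add: nonzeros_def)
qed

lemma connectivity_net_less: "connectivity net < 88 * (n ^ 2 + n * s)"
proof -
  have ramps: "layer_nonzeros layer_ramps \<le> 2 * n * 2"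
    unfolding layer_ramps_def
    by (rule order_trans[OF layer_nonzeros_of_rows_le[where d=1]])
      (auto simp: nonzeros_def length_concat_map_const[of _ _ 2])
  have coords: "layer_nonzeros layer_coords \<le> 3 * (2 * n + 1)"
    unfolding layer_coords_def
    by (rule order_trans[OF layer_nonzeros_of_rows_le[where d="2*n"]])
      (auto intro: order_trans[OF nonzeros_le_length] simp: length_row_zigzag length_row_column)
  have identity: "layer_nonzeros layer_identity \<le> 12" and tent: "layer_nonzeros layer_tent \<le> 12"
    unfolding layer_identity_def layer_tent_def
    by (auto intro!: order_trans[OF layer_nonzeros_of_rows_le[where d=3]] simp: nonzeros_def)
  have strips: "layer_nonzeros layer_strips \<le> (2 * n + 2) * 4"
    unfolding layer_strips_def
    by (rule order_trans[OF layer_nonzeros_of_rows_le[where d=3]])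
      (auto intro: order_trans[OF nonzeros_le_length] simp: length_concat_map_const[of _ _ 2])
  have cdf: "layer_nonzeros layer_cdf \<le> (2 * n * n + 1) * 4"
    unfolding layer_cdf_def
    by (rule order_trans[OF layer_nonzeros_of_rows_le[where d=3]])
      (auto simp: nonzeros_row_cdf[unfolded nonzeros_def] nonzeros_def length_concat_map_const[of _ _ "2*n"]
        length_concat_map_const[of _ _ 2])
  have out: "layer_nonzeros layer_out \<le> 2 * (2 * n * n + 2)"
    unfolding layer_out_def
    by (rule order_trans[OF layer_nonzeros_of_rows_le[where d="2*n*n+1"]])
      (auto intro: order_trans[OF nonzeros_le_length] simp: length_row_out_y)
  have "connectivity net = layer_nonzeros layer_ramps + layer_nonzeros layer_coords
      + layer_nonzeros layer_identity + (s - 1) * layer_nonzeros layer_tent + layer_nonzeros layer_strips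
      + layer_nonzeros layer_cdf + layer_nonzeros layer_out"
    unfolding connectivity_eq_sum net_def by (simp add: sum_list_replicate)
  also have "\<dots> \<le> 2 * n * 2 + 3 * (2 * n + 1) + 12 + (s - 1) * 12 + (2 * n + 2) * 4
      + (2 * n * n + 1) * 4 + 2 * (2 * n * n + 2)"
    using ramps coords identity tent strips cdf out by (intro add_mono mult_le_mono) auto
  also have "\<dots> < 88 * (n ^ 2 + n * s)"
  proof -
    have "n * 76 \<le> n * (n * 76)" "s * 88 \<le> n * (s * 88)" using n_pos by simp_all
    then have "31 + (n * 18 + (s * 12 - 12)) < n * (n * 76) + n * (s * 88)" using n_pos by linarith
    then show ?thesis using s_pos by (simp add: power2_eq_square algebra_simps)
  qed
  finally show ?thesis .
qed

section \<open>Evaluation of the network\<close>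

definition "ramps t = concat (map (\<lambda>k. [relu (t - col_start k), relu (t - col_start (Suc k))]) [0..<n])"
definition "zigzag t = dot row_zigzag (ramps t)"
definition "column_coord t = dot row_column (ramps t)"
definition "folded t = relu (tent ((tent ^^ (s - 1)) (zigzag t)))"
definition "strip_features t = [folded t, column_coord t] @
    concat (map (\<lambda>k. [relu (real k - column_coord t), relu (column_coord t + (- real k - 1))]) [0..<n])"
definition "cdf_features t = concat (map (\<lambda>k. concat (map (\<lambda>j.
     [relu (dot (row_cdf k j) (strip_features t) + - cond_cdf k j / cond_mass k j),
      relu (dot (row_cdf k j) (strip_features t) + - cond_cdf k (Suc j) / cond_mass k j)])
     [0..<n])) [0..<n])"
definition "out_x t = column_coord t / real n"
definition "out_y t = dot row_out_y (cdf_features t)"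

lemma column_coord_eq_sum:
  "column_coord t = (\<Sum>k<n. (relu (t - col_start k) - relu (t - col_start (Suc k))) / col_mass k)"
  unfolding column_coord_def row_column_def ramps_def
  by (subst dot_concat) (auto simp: sum_set_upt_conv_sum_list_nat[symmetric] atLeast0LessThan
      diff_divide_distrib intro!: sum.cong)

lemma zigzag_eq_sum:
  "zigzag t = (\<Sum>k<n. (-1) ^ k * ((relu (t - col_start k) - relu (t - col_start (Suc k))) / col_mass k))"
  unfolding zigzag_def row_zigzag_def ramps_def
  by (subst dot_concat) (auto simp: sum_set_upt_conv_sum_list_nat[symmetric] atLeast0LessThan
      diff_divide_distrib right_diff_distrib intro!: sum.cong)

lemma column_coord_nonneg: "column_coord t \<ge> 0"
  unfolding column_coord_eq_sum
  using col_mass_pos by (intro sum_nonneg divide_nonneg_pos) (force simp: relu_def col_start_Suc)+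

lemma relu_column_coord [simp]: "relu (column_coord t) = column_coord t"
  by (rule relu_eq_self[OF column_coord_nonneg])

lemma hidden_coords:
  "hidden [layer_ramps, layer_coords, layer_identity] [t]
    = [relu (zigzag t), relu (zigzag t - 1/2), column_coord t]"
  by (simp add: layer_ramps_def layer_coords_def layer_identity_def affine_apply_layer_of_rows map_concat
      ramps_def[symmetric] zigzag_def[symmetric] column_coord_def[symmetric] comp_def)

lemma hidden_tent_layers:
  "v \<ge> 0 \<Longrightarrow> hidden (replicate k layer_tent) [relu x, relu (x - 1/2), v] =
    [relu ((tent ^^ k) x), relu ((tent ^^ k) x - 1/2), v]"
proof (induction k arbitrary: x)
  case (Suc k)
  have "hidden (replicate (Suc k) layer_tent) [relu x, relu (x - 1/2), v]
      = hidden (replicate k layer_tent) [relu (tent x), relu (tent x - 1/2), v]"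
    using Suc.prems by (simp add: layer_tent_def affine_apply_layer_of_rows tent_def relu_eq_self)
  also have "\<dots> = [relu ((tent ^^ k) (tent x)), relu ((tent ^^ k) (tent x) - 1/2), v]"
    by (rule Suc.IH[OF Suc.prems])
  finally show ?case by (simp add: funpow_swap1)
qed simp

lemma length_cdf_features: "length (cdf_features t) = 2 * n * n"
  unfolding cdf_features_def
  by (subst length_concat_map_const[of _ _ "2*n"]) (auto simp: length_concat_map_const[of _ _ 2])

lemma hidden_strips_cdf:
  assumes "folded t = relu (tent G)"
  shows "hidden [layer_strips, layer_cdf] [relu G, relu (G - 1/2), column_coord t]
    = cdf_features t @ [column_coord t]"
proof -
  have "hidden [layer_strips] [relu G, relu (G - 1/2), column_coord t] = strip_features t"
    using assms by (simp add: layer_strips_def affine_apply_layer_of_rows tent_def strip_features_def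
        map_concat comp_def)
  moreover have "dot ([0,1] @ replicate (2*n) 0) (strip_features t) = column_coord t"
    unfolding strip_features_def by (subst dot_append) (auto simp: dot_replicate_0)
  then have "hidden [layer_cdf] (strip_features t) = cdf_features t @ [column_coord t]"
    by (simp add: layer_cdf_def affine_apply_layer_of_rows cdf_features_def map_concat comp_def)
  ultimately show ?thesis using hidden_append[of "[layer_strips]" "[layer_cdf]"] by simp
qed

lemma net_fun_1_2_net: "net_fun_1_2 net t = (out_x t, out_y t)"
proof -
  have "net = ([layer_ramps, layer_coords, layer_identity] @ replicate (s - 1) layer_tent @
      [layer_strips, layer_cdf]) @ [layer_out]"
    unfolding net_def by simp
  then have "realize net [t] = affine_apply layer_out (hidden [layer_strips, layer_cdf]
      (hidden (replicate (s - 1) layer_tent) (hidden [layer_ramps, layer_coords, layer_identity] [t])))"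
    by (simp only: realize_snoc hidden_append)
  also have "hidden (replicate (s - 1) layer_tent) (hidden [layer_ramps, layer_coords, layer_identity] [t]) =
      [relu ((tent ^^ (s - 1)) (zigzag t)), relu ((tent ^^ (s - 1)) (zigzag t) - 1/2), column_coord t]"
    unfolding hidden_coords by (rule hidden_tent_layers[OF column_coord_nonneg])
  also have "hidden [layer_strips, layer_cdf] \<dots> = cdf_features t @ [column_coord t]"
    by (rule hidden_strips_cdf) (simp add: folded_def)
  also have "affine_apply layer_out (cdf_features t @ [column_coord t]) = [out_x t, out_y t]"
    by (simp add: layer_out_def affine_apply_layer_of_rows dot_append length_cdf_features
        length_row_out_y dot_replicate_0 out_x_def out_y_def)
  finally show ?thesis unfolding net_fun_1_2_def by simp
qed

definition "col_local k t = (t - col_start k) / col_mass k"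

lemma ramp_difference_in_column:
  assumes "k1 < n" "col_start k1 \<le> t" "t \<le> col_start (Suc k1)" "k < n"
  shows "(relu (t - col_start k) - relu (t - col_start (Suc k))) / col_mass k =
     (if k < k1 then 1 else if k = k1 then col_local k1 t else 0)"
proof -
  have ck: "col_mass k > 0" using col_mass_pos assms by simp
  consider "k < k1" | "k = k1" | "k > k1" by linarith
  then show ?thesis
  proof cases
    case 1
    then have "col_start (Suc k) \<le> col_start k1" using assms by (intro col_start_mono) auto
    then show ?thesis using 1 assms ck by (auto simp: relu_def col_start_Suc)
  next
    case 2
    then show ?thesis using assms by (simp add: relu_def col_local_def)
  next
    case 3
    then have "col_start (Suc k1) \<le> col_start k" using assms by (intro col_start_mono) auto
    then show ?thesis using 3 assms ck by (auto simp: relu_def col_start_Suc)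
  qed
qed

lemma
  assumes "k1 < n" "col_start k1 \<le> t" "t \<le> col_start (Suc k1)"
  shows column_coord_in_column: "column_coord t = real k1 + col_local k1 t"
    and zigzag_in_column: "zigzag t = (if even k1 then col_local k1 t else 1 - col_local k1 t)"
    and col_local_range: "0 \<le> col_local k1 t" "col_local k1 t \<le> 1"
proof -
  have "column_coord t = (\<Sum>k<n. if k < k1 then 1 else if k = k1 then col_local k1 t else 0)"
    unfolding column_coord_eq_sum using assms by (intro sum.cong) (auto simp: ramp_difference_in_column)
  then show "column_coord t = real k1 + col_local k1 t"
    using sum_prefix_then_single[OF assms(1)] by simp
  have "zigzag t = (\<Sum>k<n. if k < k1 then (-1) ^ k else if k = k1 then (-1) ^ k1 * col_local k1 t else 0)"
    unfolding zigzag_eq_sum using assms by (intro sum.cong) (auto simp: ramp_difference_in_column)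
  then show "zigzag t = (if even k1 then col_local k1 t else 1 - col_local k1 t)"
    using sum_prefix_then_single[OF assms(1)] sum_alternating_sign by simp
  show "0 \<le> col_local k1 t" "col_local k1 t \<le> 1"
    using assms col_mass_pos[of k1] by (auto simp: col_local_def col_start_Suc field_simps)
qed

text \<open>On odd columns the reflection \<open>u \<mapsto> 1 - u\<close> is undone by the tent map.\<close>

lemma folded_in_column:
  assumes "k1 < n" "col_start k1 \<le> t" "t \<le> col_start (Suc k1)"
  shows "folded t = (tent ^^ s) (col_local k1 t)"
proof -
  have "(tent ^^ s) (zigzag t) = (tent ^^ s) (col_local k1 t)"
    using zigzag_in_column[OF assms] col_local_range[OF assms] s_pos funpow_tent_reflect by auto
  moreover have "tent ((tent ^^ (s - 1)) (zigzag t)) = (tent ^^ s) (zigzag t)"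
    using s_pos by (cases s) auto
  moreover have "0 \<le> (tent ^^ s) (col_local k1 t)"
    using funpow_tent_range col_local_range[OF assms] by blast
  ultimately show ?thesis unfolding folded_def by (simp add: relu_eq_self)
qed

definition "strip_gap t k = relu (real k - column_coord t) + relu (column_coord t + (- real k - 1))"

lemma dot_row_cdf:
  assumes "k < n"
  shows "dot (row_cdf k j) (strip_features t) = (folded t - teeth * strip_gap t k) / cond_mass k j"
proof -
  let ?F = "\<lambda>k'. if k' = k then [- teeth / cond_mass k j, - teeth / cond_mass k j] else [0,0]"
  let ?G = "\<lambda>k'. [relu (real k' - column_coord t), relu (column_coord t + (- real k' - 1))]"
  have "dot (row_cdf k j) (strip_features t) = folded t / cond_mass k j + (\<Sum>k'\<leftarrow>[0..<n]. dot (?F k') (?G k'))"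
    unfolding row_cdf_def strip_features_def by (subst dot_append) (auto simp: dot_concat)
  also have "(\<Sum>k'\<leftarrow>[0..<n]. dot (?F k') (?G k')) = (\<Sum>k'<n. dot (?F k') (?G k'))"
    by (simp only: sum_set_upt_conv_sum_list_nat[symmetric] set_upt atLeast0LessThan)
  also have "\<dots> = (\<Sum>k'<n. if k' = k then - teeth / cond_mass k j * strip_gap t k else 0)"
    by (intro sum.cong) (auto simp: strip_gap_def algebra_simps)
  also have "\<dots> = - teeth / cond_mass k j * strip_gap t k" using assms by simp
  finally show ?thesis by (simp add: diff_divide_distrib)
qed

lemma out_y_eq_sum: "out_y t = (\<Sum>k<n. \<Sum>j<n.
    (relu ((folded t - teeth * strip_gap t k - cond_cdf k j) / cond_mass k j)
      - relu ((folded t - teeth * strip_gap t k - cond_cdf k (Suc j)) / cond_mass k j)) / real n)"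
proof -
  have "out_y t = (\<Sum>k\<leftarrow>[0..<n]. \<Sum>j\<leftarrow>[0..<n].
      1 / real n * relu (dot (row_cdf k j) (strip_features t) + - cond_cdf k j / cond_mass k j) +
      - (1 / real n) * relu (dot (row_cdf k j) (strip_features t) + - cond_cdf k (Suc j) / cond_mass k j))"
    unfolding out_y_def row_out_y_def cdf_features_def
    by (subst dot_concat) (auto simp: length_concat_map_const[of _ _ 2] dot_concat)
  then show ?thesis
    by (auto simp: sum_set_upt_conv_sum_list_nat[symmetric] atLeast0LessThan dot_row_cdf
        diff_divide_distrib intro!: sum.cong)
qed

lemma measurable_zigzag [measurable]: "zigzag \<in> borel_measurable borel"
  unfolding zigzag_eq_sum[abs_def] by measurable

lemma measurable_column_coord [measurable]: "column_coord \<in> borel_measurable borel"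
  unfolding column_coord_eq_sum[abs_def] by measurable

lemma measurable_net_fun_1_2_net: "net_fun_1_2 net \<in> borel_measurable borel"
proof -
  have "(\<lambda>t. (out_x t, out_y t)) \<in> borel_measurable borel"
    unfolding out_x_def out_y_eq_sum[abs_def] strip_gap_def folded_def by measurable
  then show ?thesis unfolding net_fun_1_2_net[abs_def] .
qed

text \<open>The penalty \<open>teeth * strip_gap t k\<close> switches off every column except the one containing
  \<open>t\<close>: there the gap is at least \<open>u\<close> or \<open>1 - u\<close>, and \<open>folded t \<le> 2^s * min u (1 - u)\<close>.\<close>

lemma out_y_in_column:
  assumes "k1 < n" "col_start k1 \<le> t" "t \<le> col_start (Suc k1)"
  shows "out_y t = (\<Sum>j<n. relu ((folded t - cond_cdf k1 j) / cond_mass k1 j)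
      - relu ((folded t - cond_cdf k1 (Suc j)) / cond_mass k1 j)) / real n"
proof -
  let ?u = "col_local k1 t"
  have cc: "column_coord t = real k1 + ?u" by (rule column_coord_in_column[OF assms])
  have u: "0 \<le> ?u" "?u \<le> 1" by (rule col_local_range[OF assms])+
  have fold: "folded t = (tent ^^ s) ?u" by (rule folded_in_column[OF assms])
  have below: "folded t \<le> teeth * ?u" "folded t \<le> teeth * (1 - ?u)"
    unfolding fold teeth_def using funpow_tent_le funpow_tent_le_reflect u s_pos by auto
  have gap: "strip_gap t k1 = 0" using u by (simp add: strip_gap_def cc relu_def)
  have off: "relu ((folded t - teeth * strip_gap t k - cond_cdf k j) / cond_mass k j)
      - relu ((folded t - teeth * strip_gap t k - cond_cdf k (Suc j)) / cond_mass k j) = 0"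
    if k: "k < n" "k \<noteq> k1" and j: "j < n" for k j
  proof -
    have "?u \<le> strip_gap t k \<or> 1 - ?u \<le> strip_gap t k"
      using k relu_nonneg unfolding strip_gap_def cc by (cases "k < k1") (auto simp: relu_def)
    then have "folded t \<le> teeth * strip_gap t k"
      using below teeth_pos by (smt (verit) mult_left_mono)
    moreover have "cond_mass k j > 0" using cond_mass_pos k j by simp
    moreover have "0 \<le> cond_cdf k j" "0 \<le> cond_cdf k (Suc j)" using cond_cdf_nonneg k j by auto
    ultimately show ?thesis by (simp add: relu_eq_0 divide_nonpos_pos)
  qed
  have "out_y t = (\<Sum>k<n. if k = k1 then (\<Sum>j<n. (relu ((folded t - cond_cdf k1 j) / cond_mass k1 j)
      - relu ((folded t - cond_cdf k1 (Suc j)) / cond_mass k1 j)) / real n) else 0)"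
    unfolding out_y_eq_sum using gap off by (intro sum.cong) auto
  then show ?thesis using assms by (simp add: sum_divide_distrib)
qed

lemma sum_ramps_cond_cdf:
  assumes "k1 < n" "k2 < n" "cond_cdf k1 k2 \<le> \<phi>" "\<phi> \<le> cond_cdf k1 (Suc k2)"
  shows "(\<Sum>j<n. relu ((\<phi> - cond_cdf k1 j) / cond_mass k1 j) - relu ((\<phi> - cond_cdf k1 (Suc j)) / cond_mass k1 j))
     = real k2 + (\<phi> - cond_cdf k1 k2) / cond_mass k1 k2"
proof -
  have "relu ((\<phi> - cond_cdf k1 j) / cond_mass k1 j) - relu ((\<phi> - cond_cdf k1 (Suc j)) / cond_mass k1 j)
      = (if j < k2 then 1 else if j = k2 then (\<phi> - cond_cdf k1 k2) / cond_mass k1 k2 else 0)"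
    if j: "j < n" for j
  proof -
    have d: "cond_mass k1 j > 0" using cond_mass_pos assms j by simp
    consider "j < k2" | "j = k2" | "j > k2" by linarith
    then show ?thesis
    proof cases
      case 1
      then have "cond_cdf k1 (Suc j) \<le> cond_cdf k1 k2" using assms by (intro cond_cdf_mono) auto
      then show ?thesis using 1 assms d by (simp add: relu_eq_self cond_cdf_Suc field_simps)
    next
      case 2
      then show ?thesis using assms d by (simp add: relu_eq_self relu_eq_0 divide_nonpos_pos)
    next
      case 3
      then have "cond_cdf k1 (Suc k2) \<le> cond_cdf k1 j" using assms j by (intro cond_cdf_mono) auto
      moreover have "cond_cdf k1 j \<le> cond_cdf k1 (Suc j)" using d by (simp add: cond_cdf_Suc)
      ultimately show ?thesis using 3 assms d by (simp add: relu_eq_0 divide_nonpos_pos)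
    qed
  qed
  then have "(\<Sum>j<n. relu ((\<phi> - cond_cdf k1 j) / cond_mass k1 j) - relu ((\<phi> - cond_cdf k1 (Suc j)) / cond_mass k1 j))
     = (\<Sum>j<n. if j < k2 then 1 else if j = k2 then (\<phi> - cond_cdf k1 k2) / cond_mass k1 k2 else 0)"
    by (intro sum.cong) auto
  then show ?thesis using sum_prefix_then_single[OF assms(2)] by simp
qed

section \<open>The transport map\<close>

text \<open>The indices are clamped so that \<open>x = 1\<close> lies in the last cell and on its last tooth.\<close>

definition "cell_index x = min (nat \<lfloor>real n * x\<rfloor>) (n - 1)"
definition "cell_offset x = real n * x - real (cell_index x)"
definition "tooth_index x = min (nat \<lfloor>teeth * cell_offset x\<rfloor>) (2 ^ s - 1)"
definition "cond_cdf_at k y = cond_cdf k (cell_index y) + cond_mass k (cell_index y) * cell_offset y"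
definition "tooth_point k m \<sigma> = col_start k + col_mass k * tent_preimage s m \<sigma>"
definition "transport z =
  tooth_point (cell_index (fst z)) (tooth_index (fst z)) (cond_cdf_at (cell_index (fst z)) (snd z))"

lemma
  assumes "0 \<le> x" "x \<le> 1"
  shows cell_index_less: "cell_index x < n"
    and cell_offset_range: "0 \<le> cell_offset x" "cell_offset x \<le> 1"
proof -
  have nx: "0 \<le> real n * x" "real n * x \<le> real n" using assms n_pos by (auto simp: mult_left_le)
  show "cell_index x < n" using n_pos by (simp add: cell_index_def)
  have "0 \<le> cell_offset x \<and> cell_offset x \<le> 1"
  proof (cases "nat \<lfloor>real n * x\<rfloor> \<le> n - 1")
    case True
    then have "real (cell_index x) = of_int \<lfloor>real n * x\<rfloor>" using nx by (simp add: cell_index_def)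
    moreover have "of_int \<lfloor>real n * x\<rfloor> \<le> real n * x" "real n * x < of_int \<lfloor>real n * x\<rfloor> + 1"
      by linarith+
    ultimately show ?thesis unfolding cell_offset_def by linarith
  next
    case False
    then have "\<lfloor>real n * x\<rfloor> \<ge> int n" using n_pos by linarith
    then have "real n * x = real n" using nx by (simp add: le_floor_iff)
    then show ?thesis using False n_pos by (simp add: cell_offset_def cell_index_def of_nat_diff)
  qed
  then show "0 \<le> cell_offset x" "cell_offset x \<le> 1" by auto
qed

lemma
  assumes "0 \<le> u" "u \<le> 1" "cell_offset x = u"
  shows tooth_index_less: "tooth_index x < 2 ^ s"
    and tooth_index_bounds: "real (tooth_index x) / 2 ^ s \<le> u" "u \<le> (real (tooth_index x) + 1) / 2 ^ s"
proof -
  have mu: "0 \<le> teeth * u" "teeth * u \<le> teeth" using assms teeth_pos by (auto simp: mult_left_le)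
  have "(2::nat) ^ s - 1 < 2 ^ s" by simp
  then show "tooth_index x < 2 ^ s" unfolding tooth_index_def by linarith
  have "real (tooth_index x) \<le> teeth * u \<and> teeth * u \<le> real (tooth_index x) + 1"
  proof (cases "nat \<lfloor>teeth * u\<rfloor> \<le> 2 ^ s - 1")
    case True
    then have "real (tooth_index x) = of_int \<lfloor>teeth * u\<rfloor>" using assms mu by (simp add: tooth_index_def)
    moreover have "of_int \<lfloor>teeth * u\<rfloor> \<le> teeth * u" "teeth * u < of_int \<lfloor>teeth * u\<rfloor> + 1"
      by linarith+
    ultimately show ?thesis by linarith
  next
    case False
    then have "real (2 ^ s :: nat) \<le> real (nat \<lfloor>teeth * u\<rfloor>)" by (simp only: of_nat_le_iff)
    also have "\<dots> \<le> teeth * u" using mu by simp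
    finally have "teeth * u = 2 ^ s" using mu by (simp add: teeth_def)
    then show ?thesis using False assms by (simp add: tooth_index_def of_nat_diff teeth_def)
  qed
  then show "real (tooth_index x) / 2 ^ s \<le> u" "u \<le> (real (tooth_index x) + 1) / 2 ^ s"
    using teeth_pos by (auto simp: teeth_def field_simps)
qed

lemma cond_cdf_at_bounds:
  assumes "k < n" "0 \<le> y" "y \<le> 1"
  shows "cond_cdf k (cell_index y) \<le> cond_cdf_at k y" "cond_cdf_at k y \<le> cond_cdf k (Suc (cell_index y))"
    and "0 \<le> cond_cdf_at k y" "cond_cdf_at k y \<le> 1"
proof -
  have j: "cell_index y < n" and off: "0 \<le> cell_offset y" "cell_offset y \<le> 1"
    using assms(2,3) by (rule cell_index_less cell_offset_range)+
  have "cond_mass k (cell_index y) > 0" using cond_mass_pos assms(1) j by simp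
  then show lo: "cond_cdf k (cell_index y) \<le> cond_cdf_at k y"
    and hi: "cond_cdf_at k y \<le> cond_cdf k (Suc (cell_index y))"
    using off by (auto simp: cond_cdf_at_def cond_cdf_Suc mult_left_le)
  show "0 \<le> cond_cdf_at k y" "cond_cdf_at k y \<le> 1"
    using lo hi cond_cdf_nonneg[of k "cell_index y"] cond_cdf_le_1[of k "Suc (cell_index y)"] assms(1) j
    by auto
qed

lemma transport_in_column:
  assumes "0 \<le> x" "x \<le> 1" "0 \<le> y" "y \<le> 1"
  defines "k \<equiv> cell_index x"
  shows "col_start k \<le> transport (x, y)" "transport (x, y) \<le> col_start (Suc k)"
    and "col_local k (transport (x, y)) = tent_preimage s (tooth_index x) (cond_cdf_at k y)"
proof -
  have k: "k < n" unfolding k_def using assms(1,2) by (rule cell_index_less)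
  have m: "tooth_index x < 2 ^ s"
    using cell_offset_range[OF assms(1,2)] by (intro tooth_index_less) auto
  let ?p = "tent_preimage s (tooth_index x) (cond_cdf_at k y)"
  have p: "0 \<le> ?p" "?p \<le> 1"
    using tent_preimage_range[OF cond_cdf_at_bounds(3,4)[OF k assms(3,4)] m] by auto
  have ck: "col_mass k > 0" using col_mass_pos k by simp
  have t: "transport (x, y) = col_start k + col_mass k * ?p"
    by (simp add: transport_def tooth_point_def k_def)
  show "col_start k \<le> transport (x, y)" "transport (x, y) \<le> col_start (Suc k)"
    using t p ck by (auto simp: col_start_Suc mult_left_le)
  show "col_local k (transport (x, y)) = ?p" using ck by (simp add: col_local_def t)
qed

lemma
  assumes "0 \<le> x" "x \<le> 1" "0 \<le> y" "y \<le> 1"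
  shows out_y_transport: "out_y (transport (x, y)) = y"
    and out_x_transport: "\<bar>out_x (transport (x, y)) - x\<bar> \<le> 1 / (real n * 2 ^ s)"
proof -
  define k where "k = cell_index x"
  define \<sigma> where "\<sigma> = cond_cdf_at k y"
  define m where "m = tooth_index x"
  define t where "t = transport (x, y)"
  have k: "k < n" unfolding k_def using assms(1,2) by (rule cell_index_less)
  have j: "cell_index y < n" using assms(3,4) by (rule cell_index_less)
  have \<sigma>: "0 \<le> \<sigma>" "\<sigma> \<le> 1" "cond_cdf k (cell_index y) \<le> \<sigma>" "\<sigma> \<le> cond_cdf k (Suc (cell_index y))"
    unfolding \<sigma>_def using cond_cdf_at_bounds[OF k assms(3,4)] by auto
  have u: "0 \<le> cell_offset x" "cell_offset x \<le> 1" using assms(1,2) by (rule cell_offset_range)+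
  have m_less: "m < 2 ^ s" unfolding m_def using u by (intro tooth_index_less) auto
  have tk: "col_start k \<le> t" "t \<le> col_start (Suc k)"
    and local: "col_local k t = tent_preimage s m \<sigma>"
    using transport_in_column[OF assms] by (simp_all add: t_def k_def m_def \<sigma>_def)
  have "folded t = \<sigma>"
    using folded_in_column[OF k tk] local funpow_tent_preimage[OF \<sigma>(1,2) m_less] by simp
  then have "out_y t = (real (cell_index y) + (\<sigma> - cond_cdf k (cell_index y)) / cond_mass k (cell_index y)) / real n"
    using out_y_in_column[OF k tk] sum_ramps_cond_cdf[OF k j \<sigma>(3,4)] by simp
  also have "\<dots> = y"
    using cond_mass_pos[OF k j] n_pos by (simp add: \<sigma>_def cond_cdf_at_def cell_offset_def)
  finally show "out_y (transport (x, y)) = y" by (simp add: t_def)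
  have "\<bar>tent_preimage s m \<sigma> - cell_offset x\<bar> \<le> 1 / 2 ^ s"
    using tent_preimage_bounds[OF \<sigma>(1,2), of m s] tooth_index_bounds[OF u refl]
    by (simp add: m_def abs_le_iff diff_divide_distrib[symmetric] add_divide_distrib)
  moreover have "out_x t - x = (tent_preimage s m \<sigma> - cell_offset x) / real n"
    using column_coord_in_column[OF k tk] local n_pos
    by (simp add: out_x_def cell_offset_def k_def diff_divide_distrib add_divide_distrib)
  ultimately have "\<bar>out_x t - x\<bar> \<le> (1 / 2 ^ s) / real n"
    using divide_right_mono[of _ "1 / 2 ^ s" "real n"] by simp
  then show "\<bar>out_x (transport (x, y)) - x\<bar> \<le> 1 / (real n * 2 ^ s)" by (simp add: t_def mult.commute)
qed

lemma measurable_cell_index [measurable]: "cell_index \<in> measurable borel (count_space UNIV)"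
  unfolding cell_index_def by measurable

lemma measurable_cell_offset [measurable]: "cell_offset \<in> borel_measurable borel"
  unfolding cell_offset_def by measurable

lemma measurable_tooth_index [measurable]: "tooth_index \<in> measurable borel (count_space UNIV)"
  unfolding tooth_index_def by measurable

lemma measurable_cond_cdf_at [measurable]: "cond_cdf_at k \<in> borel_measurable borel"
  unfolding cond_cdf_at_def by measurable

lemma measurable_tooth_point [measurable]: "tooth_point k m \<in> borel_measurable borel"
  unfolding tooth_point_def tent_preimage_def by (cases "even m") simp_all

lemma measurable_transport_pair: "transport \<in> borel_measurable (borel \<Otimes>\<^sub>M borel)"
  unfolding transport_def tooth_point_def tent_preimage_def by measurable

lemma measurable_transport [measurable]: "transport \<in> borel_measurable borel"
  using measurable_transport_pair by (simp add: borel_prod)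

section \<open>Push-forward of the histogram under the transport map\<close>

definition "cell_interval k = {real k / real n .. (real k + 1) / real n}"
definition "tooth_left k m = (real k + real m / teeth) / real n"
definition "tooth_image k1 k2 m =
  (if even m then {tooth_point k1 m (cond_cdf k1 k2) .. tooth_point k1 m (cond_cdf k1 (Suc k2))}
   else {tooth_point k1 m (cond_cdf k1 (Suc k2)) .. tooth_point k1 m (cond_cdf k1 k2)})"

lemma cell_interval_borel [measurable]: "cell_interval k \<in> sets borel"
  unfolding cell_interval_def by simp

lemma cond_cdf_at_in_cell:
  assumes k: "k < n" and j: "j < n" and y: "y \<in> cell_interval j"
  shows "cond_cdf_at k y = cond_cdf k j + cond_mass k j * (real n * y - real j)"
proof -
  have n0: "real n > 0" using n_pos by simp
  have ny: "real j \<le> real n * y" "real n * y \<le> real j + 1"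
    using y n0 by (auto simp: cell_interval_def field_simps)
  have "0 \<le> real n * y" "real n * y \<le> real n * 1" using ny j by linarith+
  then have "0 \<le> y" "y \<le> 1" using n0 by (simp_all add: zero_le_mult_iff)
  then have j': "cell_index y < n" "0 \<le> cell_offset y" "cell_offset y \<le> 1"
    by (rule cell_index_less cell_offset_range)+
  text \<open>Only at the common endpoint of two cells can \<open>cell_index y\<close> differ from \<open>j\<close>.\<close>
  then have "cell_index y = j \<or> cell_index y = Suc j \<or> Suc (cell_index y) = j"
    using ny unfolding cell_offset_def by linarith
  then show ?thesis
  proof (elim disjE)
    assume e: "cell_index y = Suc j"
    then have "real n * y = real j + 1" using j' ny unfolding cell_offset_def by simp
    then show ?thesis using e by (simp add: cond_cdf_at_def cell_offset_def cond_cdf_Suc)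
  next
    assume e: "Suc (cell_index y) = j"
    then have "real n * y = real j" using j' ny unfolding cell_offset_def by simp
    then show ?thesis using e[symmetric] by (simp add: cond_cdf_at_def cell_offset_def cond_cdf_Suc)
  qed (simp add: cond_cdf_at_def cell_offset_def)
qed

lemma transport_on_tooth:
  assumes k: "k < n" and m: "m < 2 ^ s" and x: "tooth_left k m \<le> x" "x < tooth_left k (Suc m)"
  shows "transport (x, y) = tooth_point k m (cond_cdf_at k y)"
proof -
  have n0: "real n > 0" using n_pos by simp
  have "real (m + 1) \<le> real (2 ^ s)" using m by (simp only: of_nat_le_iff)
  then have mm: "(real m + 1) / teeth \<le> 1" using teeth_pos by (simp add: teeth_def)
  have nx: "real k + real m / teeth \<le> real n * x" "real n * x < real k + (real m + 1) / teeth"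
    using x n0 by (auto simp: tooth_left_def field_simps)
  moreover have "0 \<le> real m / teeth" using teeth_pos by simp
  ultimately have "\<lfloor>real n * x\<rfloor> = int k" using mm by (intro floor_unique) auto
  then have kk: "cell_index x = k" using k by (simp add: cell_index_def)
  have "real m \<le> teeth * cell_offset x" "teeth * cell_offset x < real m + 1"
    using nx teeth_pos by (auto simp: cell_offset_def kk field_simps)
  then have "\<lfloor>teeth * cell_offset x\<rfloor> = int m" by (intro floor_unique) auto
  then have "tooth_index x = m" using m by (simp add: tooth_index_def)
  then show ?thesis using kk by (simp add: transport_def)
qed

lemma tooth_point_affine:
  "tooth_point k m (a0 + d * z) = tooth_point k m a0 + (if even m then 1 else -1) * (col_mass k * d / teeth) * z"
  by (simp add: tooth_point_def tent_preimage_def teeth_def field_simps)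

text \<open>On a tooth, \<open>y \<mapsto> transport (x, y)\<close> is affine on each cell with slope of modulus
  \<open>w k1 k2 / (n * 2^s)\<close>: exactly the density of the cell times the width of the tooth.\<close>

lemma nn_integral_tooth_row:
  assumes k1: "k1 < n" and k2: "k2 < n" and A: "A \<in> sets borel"
  shows "ennreal (w k1 k2 / (real n * teeth)) *
     (\<integral>\<^sup>+y. indicator (cell_interval k2) y * indicator A (tooth_point k1 m (cond_cdf_at k1 y)) \<partial>lborel)
   = emeasure lborel (A \<inter> tooth_image k1 k2 m)"
proof -
  have n0: "real n > 0" using n_pos by simp
  define sg :: real where "sg = (if even m then 1 else -1)"
  define \<beta> where "\<beta> = sg * (col_mass k1 * cond_mass k1 k2 / teeth) * real n"
  define \<alpha> where "\<alpha> = tooth_point k1 m (cond_cdf k1 k2) - \<beta> * (real k2 / real n)"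
  have abs_\<beta>: "\<bar>\<beta>\<bar> = w k1 k2 / (real n * teeth)"
    using col_weight_pos[OF k1] teeth_pos n0 w_pos[OF k1 k2]
    by (simp add: \<beta>_def sg_def col_mass_def cond_mass_def abs_mult power2_eq_square field_simps)
  have "\<beta> \<noteq> 0" using abs_\<beta> w_pos[OF k1 k2] teeth_pos n0 by auto
  moreover have "tooth_point k1 m (cond_cdf_at k1 y) = \<alpha> + \<beta> * y"
    if "real k2 / real n \<le> y" "y \<le> (real k2 + 1) / real n" for y
  proof -
    have "tooth_point k1 m (cond_cdf_at k1 y)
        = tooth_point k1 m (cond_cdf k1 k2 + cond_mass k1 k2 * (real n * y - real k2))"
      using cond_cdf_at_in_cell[OF k1 k2] that by (simp add: cell_interval_def)
    also have "\<dots> = \<alpha> + \<beta> * y"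
      unfolding tooth_point_affine \<alpha>_def \<beta>_def sg_def using n0 teeth_pos by (simp add: field_simps)
    finally show ?thesis .
  qed
  ultimately have "ennreal \<bar>\<beta>\<bar> *
      (\<integral>\<^sup>+y. indicator (cell_interval k2) y * indicator A (tooth_point k1 m (cond_cdf_at k1 y)) \<partial>lborel)
      = emeasure lborel (A \<inter> {min (\<alpha> + \<beta> * (real k2 / real n)) (\<alpha> + \<beta> * ((real k2 + 1) / real n)) ..
                   max (\<alpha> + \<beta> * (real k2 / real n)) (\<alpha> + \<beta> * ((real k2 + 1) / real n))})"
    unfolding cell_interval_def using n0 A
    by (intro nn_integral_indicator_affine) (auto simp: field_simps)
  also have "\<dots> = emeasure lborel (A \<inter> tooth_image k1 k2 m)"
  proof -
    have "\<alpha> + \<beta> * ((real k2 + 1) / real n) = tooth_point k1 m (cond_cdf k1 (Suc k2))"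
      using tooth_point_affine[of k1 m "cond_cdf k1 k2" "cond_mass k1 k2" 1] n0 teeth_pos
      by (simp add: cond_cdf_Suc \<alpha>_def \<beta>_def sg_def field_simps)
    moreover have "\<alpha> + \<beta> * (real k2 / real n) = tooth_point k1 m (cond_cdf k1 k2)"
      by (simp add: \<alpha>_def)
    moreover have "if even m then tooth_point k1 m (cond_cdf k1 k2) \<le> tooth_point k1 m (cond_cdf k1 (Suc k2))
        else tooth_point k1 m (cond_cdf k1 (Suc k2)) \<le> tooth_point k1 m (cond_cdf k1 k2)"
      using tooth_point_affine[of k1 m "cond_cdf k1 k2" "cond_mass k1 k2" 1]
        col_mass_pos[OF k1] cond_mass_pos[OF k1 k2] teeth_pos
      by (auto simp: cond_cdf_Suc)
    ultimately show ?thesis unfolding tooth_image_def by (auto simp: min_def max_def)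
  qed
  finally show ?thesis unfolding abs_\<beta> .
qed

lemma measurable_transport_section [measurable]: "(\<lambda>y. transport (x, y)) \<in> borel_measurable borel"
  by (cases "even (tooth_index x)"; simp add: transport_def tooth_point_def tent_preimage_def; measurable)

lemma nn_integral_cell_iterated:
  assumes A[measurable]: "A \<in> sets borel"
  shows "(\<integral>\<^sup>+z. ennreal (w k1 k2) * indicator (cell_interval k1) (fst z) * indicator (cell_interval k2) (snd z)
            * indicator A (transport z) \<partial>lborel)
       = (\<integral>\<^sup>+x. indicator (cell_interval k1) x *
            (\<integral>\<^sup>+y. ennreal (w k1 k2) * indicator (cell_interval k2) y * indicator A (transport (x, y)) \<partial>lborel) \<partial>lborel)"
    (is "_ = (\<integral>\<^sup>+x. indicator _ x * ?F x \<partial>lborel)")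
proof -
  have "(\<lambda>z. ennreal (w k1 k2) * indicator (cell_interval k1) (fst z) * indicator (cell_interval k2) (snd z)
      * indicator A (transport z)) \<in> borel_measurable (borel \<Otimes>\<^sub>M borel)"
    using measurable_transport_pair by measurable
  then have "(\<integral>\<^sup>+z. ennreal (w k1 k2) * indicator (cell_interval k1) (fst z) * indicator (cell_interval k2) (snd z)
            * indicator A (transport z) \<partial>lborel)
      = (\<integral>\<^sup>+x. \<integral>\<^sup>+y. ennreal (w k1 k2) * indicator (cell_interval k1) x * indicator (cell_interval k2) y
            * indicator A (transport (x, y)) \<partial>lborel \<partial>lborel)"
    by (subst lborel_prod[symmetric]) (simp add: lborel.nn_integral_fst[symmetric]
        measurable_cong_sets[OF sets_pair_measure_cong[OF sets_lborel sets_lborel] refl])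
  also have "\<dots> = (\<integral>\<^sup>+x. indicator (cell_interval k1) x * ?F x \<partial>lborel)"
  proof (intro nn_integral_cong)
    fix x
    have "(\<integral>\<^sup>+y. ennreal (w k1 k2) * indicator (cell_interval k1) x * indicator (cell_interval k2) y
            * indicator A (transport (x, y)) \<partial>lborel)
        = (\<integral>\<^sup>+y. indicator (cell_interval k1) x * (ennreal (w k1 k2) * indicator (cell_interval k2) y
            * indicator A (transport (x, y))) \<partial>lborel)"
      by (intro nn_integral_cong) (simp add: mult_ac)
    also have "\<dots> = indicator (cell_interval k1) x * ?F x"
      by (intro nn_integral_cmult) measurable
    finally show "(\<integral>\<^sup>+y. ennreal (w k1 k2) * indicator (cell_interval k1) x * indicator (cell_interval k2) y
            * indicator A (transport (x, y)) \<partial>lborel) = indicator (cell_interval k1) x * ?F x" .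
  qed
  finally show ?thesis .
qed

lemma tooth_left_Suc: "tooth_left k (Suc m) = tooth_left k m + 1 / (real n * teeth)"
  using n_pos teeth_pos by (simp add: tooth_left_def field_simps)

lemma tooth_left_mono: "tooth_left k m \<le> tooth_left k (Suc m)"
  using n_pos teeth_pos by (simp add: tooth_left_Suc)

lemma AE_indicator_cell_interval_eq_teeth:
  "AE x in lborel. indicator (cell_interval k) x
     = (\<Sum>m<2^s. indicator {tooth_left k m..<tooth_left k (Suc m)} x :: ennreal)"
  using AE_lborel_singleton[of "(real k + 1) / real n"]
proof eventually_elim
  fix x :: real assume "x \<noteq> (real k + 1) / real n"
  then have "indicator (cell_interval k) x = (indicator {tooth_left k 0..<tooth_left k (2^s)} x :: ennreal)"
    by (auto simp: tooth_left_def teeth_def cell_interval_def indicator_def)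
  also have "\<dots> = (\<Sum>m<2^s. indicator {tooth_left k m..<tooth_left k (Suc m)} x)"
    by (rule indicator_atLeastLessThan_partition) (rule tooth_left_mono)
  finally show "indicator (cell_interval k) x
      = (\<Sum>m<2^s. indicator {tooth_left k m..<tooth_left k (Suc m)} x :: ennreal)" .
qed

lemma nn_integral_row_on_tooth:
  assumes k1: "k1 < n" and m: "m < 2 ^ s" and x: "x \<in> {tooth_left k1 m..<tooth_left k1 (Suc m)}"
    and A[measurable]: "A \<in> sets borel"
  shows "(\<integral>\<^sup>+y. ennreal (w k1 k2) * indicator (cell_interval k2) y * indicator A (transport (x, y)) \<partial>lborel)
    = ennreal (w k1 k2) *
      (\<integral>\<^sup>+y. indicator (cell_interval k2) y * indicator A (tooth_point k1 m (cond_cdf_at k1 y)) \<partial>lborel)"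
proof -
  have "(\<integral>\<^sup>+y. ennreal (w k1 k2) * indicator (cell_interval k2) y * indicator A (transport (x, y)) \<partial>lborel)
      = (\<integral>\<^sup>+y. ennreal (w k1 k2) * (indicator (cell_interval k2) y
          * indicator A (tooth_point k1 m (cond_cdf_at k1 y))) \<partial>lborel)"
    using transport_on_tooth[OF k1 m] x by (simp add: mult.assoc)
  also have "\<dots> = ennreal (w k1 k2) *
      (\<integral>\<^sup>+y. indicator (cell_interval k2) y * indicator A (tooth_point k1 m (cond_cdf_at k1 y)) \<partial>lborel)"
    by (rule nn_integral_cmult) measurable
  finally show ?thesis .
qed

lemma tooth_row_times_width:
  assumes k1: "k1 < n" and k2: "k2 < n" and A: "A \<in> sets borel"
  shows "ennreal (w k1 k2) *
      (\<integral>\<^sup>+y. indicator (cell_interval k2) y * indicator A (tooth_point k1 m (cond_cdf_at k1 y)) \<partial>lborel) *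
      emeasure lborel {tooth_left k1 m..<tooth_left k1 (Suc m)}
    = emeasure lborel (A \<inter> tooth_image k1 k2 m)"
proof -
  let ?I = "\<integral>\<^sup>+y. indicator (cell_interval k2) y * indicator A (tooth_point k1 m (cond_cdf_at k1 y)) \<partial>lborel"
  have "emeasure lborel {tooth_left k1 m..<tooth_left k1 (Suc m)} = ennreal (1 / (real n * teeth))"
    using tooth_left_mono[of k1 m] by (simp add: tooth_left_Suc)
  then have "ennreal (w k1 k2) * ?I * emeasure lborel {tooth_left k1 m..<tooth_left k1 (Suc m)}
      = (ennreal (w k1 k2) * ennreal (1 / (real n * teeth))) * ?I"
    by (simp only: mult_ac)
  also have "\<dots> = ennreal (w k1 k2 / (real n * teeth)) * ?I"
    using w_pos[OF k1 k2] n_pos teeth_pos by (simp add: ennreal_mult[symmetric])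
  also have "\<dots> = emeasure lborel (A \<inter> tooth_image k1 k2 m)"
    by (rule nn_integral_tooth_row[OF k1 k2 A])
  finally show ?thesis .
qed

lemma nn_integral_cell_transport:
  assumes k1: "k1 < n" and k2: "k2 < n" and A[measurable]: "A \<in> sets borel"
  shows "(\<integral>\<^sup>+z. ennreal (w k1 k2) * indicator (cell_interval k1) (fst z) * indicator (cell_interval k2) (snd z)
            * indicator A (transport z) \<partial>lborel)
       = (\<Sum>m<2^s. emeasure lborel (A \<inter> tooth_image k1 k2 m))"
proof -
  define F where "F x = (\<integral>\<^sup>+y. ennreal (w k1 k2) * indicator (cell_interval k2) y
      * indicator A (transport (x, y)) \<partial>lborel)" for x
  define G where "G m = ennreal (w k1 k2) *
      (\<integral>\<^sup>+y. indicator (cell_interval k2) y * indicator A (tooth_point k1 m (cond_cdf_at k1 y)) \<partial>lborel)" for m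
  define S where "S m = {tooth_left k1 m..<tooth_left k1 (Suc m)}" for m
  have "(\<integral>\<^sup>+z. ennreal (w k1 k2) * indicator (cell_interval k1) (fst z) * indicator (cell_interval k2) (snd z)
            * indicator A (transport z) \<partial>lborel) = (\<integral>\<^sup>+x. indicator (cell_interval k1) x * F x \<partial>lborel)"
    unfolding F_def by (rule nn_integral_cell_iterated[OF A])
  also have "\<dots> = (\<integral>\<^sup>+x. (\<Sum>m<2^s. G m * indicator (S m) x) \<partial>lborel)"
  proof (intro nn_integral_cong_AE)
    show "AE x in lborel. indicator (cell_interval k1) x * F x = (\<Sum>m<2^s. G m * indicator (S m) x)"
      using AE_indicator_cell_interval_eq_teeth[of k1, folded S_def]
    proof eventually_elim
      fix x assume "indicator (cell_interval k1) x = (\<Sum>m<2^s. indicator (S m) x :: ennreal)"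
      then have "indicator (cell_interval k1) x * F x = (\<Sum>m<2^s. F x * indicator (S m) x)"
        by (metis sum_distrib_left mult.commute)
      also have "\<dots> = (\<Sum>m<2^s. G m * indicator (S m) x)"
      proof (intro sum.cong refl)
        fix m :: nat assume "m \<in> {..<2^s}"
        then show "F x * indicator (S m) x = G m * indicator (S m) x"
          using nn_integral_row_on_tooth[OF k1 _ _ A, of m x k2]
          by (cases "x \<in> S m") (auto simp: F_def G_def S_def)
      qed
      finally show "indicator (cell_interval k1) x * F x = (\<Sum>m<2^s. G m * indicator (S m) x)" .
    qed
  qed
  also have "\<dots> = (\<Sum>m<2^s. G m * emeasure lborel (S m))"
    by (subst nn_integral_sum) (auto simp: S_def nn_integral_cmult_indicator)
  also have "\<dots> = (\<Sum>m<2^s. emeasure lborel (A \<inter> tooth_image k1 k2 m))"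
    using tooth_row_times_width[OF k1 k2 A] by (simp add: G_def S_def)
  finally show ?thesis .
qed

definition "tooth_start k m = col_start k + col_mass k * real m / teeth"

lemma tooth_point_0: "tooth_point k m 0 = (if even m then tooth_start k m else tooth_start k (Suc m))"
  by (simp add: tooth_point_def tent_preimage_def tooth_start_def teeth_def)

lemma tooth_point_1: "tooth_point k m 1 = (if even m then tooth_start k (Suc m) else tooth_start k m)"
  by (simp add: tooth_point_def tent_preimage_def tooth_start_def teeth_def field_simps)

lemma tooth_point_mono:
  assumes "k < n" "\<sigma> \<le> \<sigma>'"
  shows "if even m then tooth_point k m \<sigma> \<le> tooth_point k m \<sigma>' else tooth_point k m \<sigma>' \<le> tooth_point k m \<sigma>"
  using assms col_mass_pos[OF assms(1)] by (auto simp: tooth_point_def tent_preimage_def divide_right_mono)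

text \<open>The images of the cells of column \<open>k\<close> tile each tooth, in reversed order on odd teeth.\<close>

lemma sum_emeasure_tooth_image:
  assumes k: "k < n" and A: "A \<in> sets borel"
  shows "(\<Sum>j<n. emeasure lborel (A \<inter> tooth_image k j m))
    = emeasure lborel (A \<inter> {tooth_start k m .. tooth_start k (Suc m)})"
proof (cases "even m")
  case True
  define b where "b j = tooth_point k m (cond_cdf k j)" for j
  have "(\<Sum>j<n. emeasure lborel (A \<inter> tooth_image k j m)) = (\<Sum>j<n. emeasure lborel (A \<inter> {b j .. b (Suc j)}))"
    using True by (simp add: tooth_image_def b_def)
  also have "\<dots> = emeasure lborel (A \<inter> {b 0 .. b n})"
    using True k tooth_point_mono[OF k] cond_cdf_mono
    by (intro emeasure_Int_Icc_telescope A) (simp add: b_def)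
  also have "\<dots> = emeasure lborel (A \<inter> {tooth_start k m .. tooth_start k (Suc m)})"
    using True cond_cdf_n[OF k] by (simp add: b_def tooth_point_0 tooth_point_1)
  finally show ?thesis .
next
  case False
  define b where "b j = tooth_point k m (cond_cdf k (n - j))" for j
  have "(\<Sum>j<n. emeasure lborel (A \<inter> tooth_image k j m)) = (\<Sum>i<n. emeasure lborel (A \<inter> tooth_image k (n - Suc i) m))"
    by (rule sum.nat_diff_reindex[symmetric])
  also have "\<dots> = (\<Sum>i<n. emeasure lborel (A \<inter> {b i .. b (Suc i)}))"
  proof (intro sum.cong refl)
    fix i assume "i \<in> {..<n}"
    then have "Suc (n - Suc i) = n - i" by simp
    then show "emeasure lborel (A \<inter> tooth_image k (n - Suc i) m) = emeasure lborel (A \<inter> {b i .. b (Suc i)})"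
      using False by (simp add: tooth_image_def b_def)
  qed
  also have "\<dots> = emeasure lborel (A \<inter> {b 0 .. b n})"
  proof (rule emeasure_Int_Icc_telescope[OF _ A])
    fix i assume "i < n"
    then have "cond_cdf k (n - Suc i) \<le> cond_cdf k (n - i)" using k by (intro cond_cdf_mono) auto
    then show "b i \<le> b (Suc i)" using tooth_point_mono[OF k, of _ _ m] False by (simp add: b_def)
  qed
  also have "\<dots> = emeasure lborel (A \<inter> {tooth_start k m .. tooth_start k (Suc m)})"
    using False cond_cdf_n[OF k] by (simp add: b_def tooth_point_0 tooth_point_1)
  finally show ?thesis .
qed

lemma sum_emeasure_teeth:
  assumes k: "k < n" and A: "A \<in> sets borel"
  shows "(\<Sum>m<2^s. emeasure lborel (A \<inter> {tooth_start k m .. tooth_start k (Suc m)}))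
    = emeasure lborel (A \<inter> {col_start k .. col_start (Suc k)})"
proof -
  have "(\<Sum>m<2^s. emeasure lborel (A \<inter> {tooth_start k m .. tooth_start k (Suc m)}))
      = emeasure lborel (A \<inter> {tooth_start k 0 .. tooth_start k (2^s)})"
    using col_mass_pos[OF k] teeth_pos
    by (intro emeasure_Int_Icc_telescope A) (simp add: tooth_start_def divide_right_mono)
  then show ?thesis by (simp add: tooth_start_def teeth_def col_start_Suc)
qed

lemma sum_emeasure_columns:
  assumes A: "A \<in> sets borel"
  shows "(\<Sum>k<n. emeasure lborel (A \<inter> {col_start k .. col_start (Suc k)})) = emeasure lborel (A \<inter> {0..1})"
  using emeasure_Int_Icc_telescope[of n col_start, OF _ A] col_mass_pos col_start_n
  by (simp add: col_start_Suc less_imp_le)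

lemma hist_density_eq_cells:
  "hist_density n w z = (\<Sum>k1<n. \<Sum>k2<n.
     w k1 k2 * indicator (cell_interval k1) (fst z) * indicator (cell_interval k2) (snd z))"
  by (cases z) (simp add: hist_density_def cell_interval_def indicator_times mult_ac)

lemma measurable_hist_density [measurable]: "hist_density n w \<in> borel_measurable borel"
proof -
  have "(\<lambda>z. \<Sum>k1<n. \<Sum>k2<n. w k1 k2 * indicator (cell_interval k1) (fst z) * indicator (cell_interval k2) (snd z))
      \<in> borel_measurable (borel \<Otimes>\<^sub>M borel)"
    by measurable
  then show ?thesis unfolding hist_density_eq_cells[abs_def] by (simp add: borel_prod)
qed

lemma ennreal_hist_density_eq_cells:
  "ennreal (hist_density n w z) = (\<Sum>k1<n. \<Sum>k2<n.
     ennreal (w k1 k2) * indicator (cell_interval k1) (fst z) * indicator (cell_interval k2) (snd z))"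
proof -
  have nonneg: "0 \<le> w k1 k2 * indicator X x * indicator Y y" if "k1 < n" "k2 < n" for k1 k2 X Y x y
    using w_pos[OF that] by (simp add: indicator_def)
  have "ennreal (hist_density n w z) = (\<Sum>k1<n. ennreal (\<Sum>k2<n.
      w k1 k2 * indicator (cell_interval k1) (fst z) * indicator (cell_interval k2) (snd z)))"
    unfolding hist_density_eq_cells by (rule sum_ennreal[symmetric]) (intro sum_nonneg nonneg, auto)
  also have "\<dots> = (\<Sum>k1<n. \<Sum>k2<n.
      ennreal (w k1 k2 * indicator (cell_interval k1) (fst z) * indicator (cell_interval k2) (snd z)))"
    by (intro sum.cong refl sum_ennreal[symmetric] nonneg) auto
  also have "\<dots> = (\<Sum>k1<n. \<Sum>k2<n.
      ennreal (w k1 k2) * indicator (cell_interval k1) (fst z) * indicator (cell_interval k2) (snd z))"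
    by (intro sum.cong refl) (auto simp: indicator_def)
  finally show ?thesis .
qed

lemma distr_transport: "distr (density_measure (hist_density n w)) borel transport = unif01"
proof (rule measure_eqI)
  fix A assume "A \<in> sets (distr (density_measure (hist_density n w)) borel transport)"
  then have A[measurable]: "A \<in> sets borel" by simp
  have "emeasure (distr (density_measure (hist_density n w)) borel transport) A
      = emeasure (density_measure (hist_density n w)) (transport -` A)"
    by (simp add: density_measure_def emeasure_distr measurable_cong_sets[OF sets_density refl])
  also have "\<dots> = (\<integral>\<^sup>+z. ennreal (hist_density n w z) * indicator (transport -` A) z \<partial>lborel)"
    using measurable_sets[OF measurable_transport A] unfolding density_measure_def
    by (intro emeasure_density) (auto simp: measurable_cong_sets[OF sets_lborel refl])
  also have "\<dots> = (\<integral>\<^sup>+z. ennreal (hist_density n w z) * indicator A (transport z) \<partial>lborel)"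
    by (simp add: indicator_vimage)
  also have "\<dots> = (\<Sum>k1<n. \<Sum>k2<n. \<integral>\<^sup>+z. ennreal (w k1 k2) * indicator (cell_interval k1) (fst z)
      * indicator (cell_interval k2) (snd z) * indicator A (transport z) \<partial>lborel)"
  proof -
    have cell[measurable]: "(\<lambda>z. ennreal (w k1 k2) * indicator (cell_interval k1) (fst z)
        * indicator (cell_interval k2) (snd z) * indicator A (transport z)) \<in> borel_measurable lborel" for k1 k2
    proof -
      have "(\<lambda>z. ennreal (w k1 k2) * indicator (cell_interval k1) (fst z)
          * indicator (cell_interval k2) (snd z) * indicator A (transport z)) \<in> borel_measurable (borel \<Otimes>\<^sub>M borel)"
        using measurable_transport_pair by measurable
      then show ?thesis by (simp add: borel_prod measurable_cong_sets[OF sets_lborel refl])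
    qed
    show ?thesis
      unfolding ennreal_hist_density_eq_cells sum_distrib_right
      by (simp only: nn_integral_sum[OF borel_measurable_sum] nn_integral_sum cell)
  qed
  also have "\<dots> = (\<Sum>k1<n. \<Sum>m<2^s. \<Sum>k2<n. emeasure lborel (A \<inter> tooth_image k1 k2 m))"
    by (simp add: nn_integral_cell_transport sum.swap[of _ "{..<n}" "{..<2^s}"])
  also have "\<dots> = emeasure lborel (A \<inter> {0..1})"
    by (simp add: sum_emeasure_tooth_image sum_emeasure_teeth sum_emeasure_columns)
  also have "\<dots> = emeasure unif01 A"
    by (simp add: unif01_def Int_commute divide_ennreal_def)
  finally show "emeasure (distr (density_measure (hist_density n w)) borel transport) A = emeasure unif01 A" .
qed (simp add: unif01_def)

lemma prob_space_hist_density: "prob_space (density_measure (hist_density n w))"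
proof
  have "emeasure (distr (density_measure (hist_density n w)) borel transport) UNIV
      = emeasure (density_measure (hist_density n w)) (transport -` UNIV)"
    by (simp add: density_measure_def emeasure_distr measurable_cong_sets[OF sets_density refl])
  then show "emeasure (density_measure (hist_density n w)) (space (density_measure (hist_density n w))) = 1"
    by (simp add: distr_transport[unfolded density_measure_def] unif01_def divide_ennreal_def density_measure_def)
qed

lemma hist_density_support:
  assumes "hist_density n w z \<noteq> 0"
  shows "fst z \<in> {0..1} \<and> snd z \<in> {0..1}"
proof (rule ccontr)
  assume outside: "\<not> (fst z \<in> {0..1} \<and> snd z \<in> {0..1})"
  have sub: "cell_interval k \<subseteq> {0..1}" if "k < n" for k
    using that n_pos by (auto simp: cell_interval_def field_simps)
  have "w k1 k2 * indicator (cell_interval k1) (fst z) * indicator (cell_interval k2) (snd z) = 0"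
    if "k1 < n" "k2 < n" for k1 k2
    using outside sub[OF that(1)] sub[OF that(2)] by (auto simp: indicator_def)
  then have "hist_density n w z = 0"
    unfolding hist_density_eq_cells by (intro sum.neutral ballI) simp
  with assms show False ..
qed

lemma wasserstein1_net_le:
  "wasserstein1 (pushforward_U (net_fun_1_2 net)) (density_measure (hist_density n w))
     \<le> ennreal (1 / (real n * 2 ^ s))"
proof -
  let ?\<nu> = "density_measure (hist_density n w)"
  have sets_\<nu>: "sets ?\<nu> = sets borel" by (simp add: density_measure_def)
  have "wasserstein1 (pushforward_U (net_fun_1_2 net)) ?\<nu>
      \<le> (\<integral>\<^sup>+z. ennreal (dist (net_fun_1_2 net (transport z)) z) \<partial>?\<nu>)"
    unfolding pushforward_U_def
    by (rule wasserstein1_le_transport[OF sets_\<nu> _ distr_transport measurable_net_fun_1_2_net])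
      (simp add: measurable_cong_sets[OF sets_\<nu> refl])
  also have "\<dots> \<le> (\<integral>\<^sup>+z. ennreal (1 / (real n * 2 ^ s)) \<partial>?\<nu>)"
  proof (rule nn_integral_mono_AE)
    have "AE z in lborel. 0 < ennreal (hist_density n w z) \<longrightarrow> fst z \<in> {0..1} \<and> snd z \<in> {0..1}"
      by (intro AE_I2 impI hist_density_support) auto
    then have "AE z in ?\<nu>. fst z \<in> {0..1} \<and> snd z \<in> {0..1}"
      unfolding density_measure_def by (subst AE_density) simp_all
    then show "AE z in ?\<nu>. ennreal (dist (net_fun_1_2 net (transport z)) z) \<le> ennreal (1 / (real n * 2 ^ s))"
      by eventually_elim (auto intro!: ennreal_leI simp: net_fun_1_2_net dist_Pair_Pair dist_real_def
          out_y_transport out_x_transport)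
  qed
  also have "\<dots> = ennreal (1 / (real n * 2 ^ s))"
    using prob_space.emeasure_space_1[OF prob_space_hist_density] by simp
  finally show ?thesis .
qed

end

theorem mainTheorem8:
  fixes n s :: nat and p :: "real \<times> real \<Rightarrow> real"
  assumes "n \<ge> 1" and "s \<ge> 1"
    and "p \<in> hist_class n"
  shows "\<exists>\<Psi> \<in> relu_nets 1 2.
           connectivity \<Psi> < 88 * (n ^ 2 + n * s) \<and> depth \<Psi> = s + 5 \<and>
           wasserstein1 (pushforward_U (net_fun_1_2 \<Psi>)) (density_measure p)
             \<le> ennreal (2 * sqrt 2 / (real n * 2 ^ s))"
proof -
  obtain w where p: "p = hist_density n w"
    and "\<forall>k1<n. \<forall>k2<n. w k1 k2 > 0" "(\<Sum>k1<n. \<Sum>k2<n. w k1 k2) = real n ^ 2"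
    using assms(3) unfolding hist_class_def by auto
  then interpret hist_net n s w
    using assms(1,2) by unfold_locales auto
  have "1 / (real n * 2 ^ s) \<le> 2 * sqrt 2 / (real n * 2 ^ s)"
    using assms(1) by (intro divide_right_mono) (auto intro: order_trans[of _ "sqrt 2"])
  then have "wasserstein1 (pushforward_U (net_fun_1_2 net)) (density_measure p)
      \<le> ennreal (2 * sqrt 2 / (real n * 2 ^ s))"
    unfolding p using wasserstein1_net_le by (meson ennreal_leI order.trans)
  then show ?thesis
    using net_in_relu_nets connectivity_net_less depth_net by blast
qed

end
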